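(* Let $q_0\equiv 0$ (free operator $\mathcal A_0$). Every $\lambda\in\mathbb R$ satisfying $$\Big[1-\rho^2\frac{\lambda}{a}\Big]\frac{\sin\sqrt{\lambda/a}}{\sqrt{\lambda/a}}+2\rho\cos\sqrt{\lambda/a}=0$$ is an eigenvalue of infinite multiplicity of $\mathcal A_0$, and the corresponding eigenspace is the closed linear span of simple loop states (eigenfunctions supported on the six edges of a single hexagon, with all vertex values $\omega_v=0$).
   Context: Fix $a>0$, $\kappa^{-1}\ge0$, $m\ge0$, $\rho:=a\kappa^{-1}$. $\cos\sqrt{\lambda/a}$ and $\frac{\sin\sqrt{\lambda/a}}{\sqrt{\lambda/a}}$ denote the entire functions $\sum_k(-\lambda/a)^k/(2k)!$ and $\sum_k(-\lambda/a)^k/(2k+1)!$ of $\lambda$. $G$: hexagonal lattice with edges of length 1 identified with $[0,1]$; a hexagon is a 6-cycle bounding a face. $\partial_nu_e(v)$: outward derivative ($-u_e'(0)$ at $x=0$, $u_e'(1)$ at $x=1$). $\mathcal A_0$: if $m>0$, the operator on $L^2(G)\oplus\ell^2(\mathcal V)$ (inner product $\sum_e\int u_e\bar w_e+m\sum_v\omega_v\bar\eta_v$) with domain $(u,\omega)$, $u_e\in H^2(0,1)$, $\sum_e\|u_e\|_{H^2}^2<\infty$, $\omega\in\ell^2$, $u_e(v)+\rho\partial_nu_e(v)=\omega_v$ for all $v$, $e\ni v$, acting as $(u,\omega)\mapsto((-au_e'')_e,(m^{-1}a\sum_{e\ni v}\partial_nu_e(v))_v)$; if $m=0$, the operator $u\mapsto(-au_e'')_e$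 on $L^2(G)$ with domain requiring $u_e(v)+\rho\partial_nu_e(v)$ independent of $e\ni v$ and $\sum_{e\ni v}\partial_nu_e(v)=0$. *)

theory Defs
  imports "HOL-Analysis.Analysis"
begin

text \<open>Vertices: (i,j,False) is the A-vertex of cell (i,j), (i,j,True) the B-vertex.
  Edge (i,j,d) joins the A-vertex (i,j) (identified with x=0) to the B-vertex
  (i,j) for d=D0, (i-1,j) for d=D1, (i,j-1) for d=D2 (identified with x=1).\<close>

datatype dir = D0 | D1 | D2

type_synonym vertex = "int \<times> int \<times> bool"
type_synonym edge = "int \<times> int \<times> dir"

definition tailv :: "edge \<Rightarrow> vertex" where
  "tailv e = (case e of (i, j, d) \<Rightarrow> (i, j, False))"

definition headv :: "edge \<Rightarrow> vertex" where
  "headv e = (case e of (i, j, d) \<Rightarrow>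
     (case d of D0 \<Rightarrow> (i, j, True) | D1 \<Rightarrow> (i - 1, j, True) | D2 \<Rightarrow> (i, j - 1, True)))"

definition incident :: "vertex \<Rightarrow> edge set" where
  "incident v = {e. tailv e = v \<or> headv e = v}"

text \<open>The hexagonal face with label (i,j): the 6-cycle
  A(i,j) - B(i,j) - A(i,j+1) - B(i-1,j+1) - A(i-1,j+1) - B(i-1,j) - A(i,j).
  Every face of the lattice is of this form for exactly one (i,j).\<close>

definition hexagon :: "int \<times> int \<Rightarrow> edge set" where
  "hexagon h = (case h of (i, j) \<Rightarrow>
     {(i, j, D0), (i, j, D1), (i, j + 1, D2), (i, j + 1, D1),
      (i - 1, j + 1, D0), (i - 1, j + 1, D2)})"

text \<open>A state is a pair (u, \<omega>): u e is the function on edge e (parametrised by [0,1];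
  values outside [0,1] are irrelevant), \<omega> v the vertex value.\<close>

type_synonym state = "(edge \<Rightarrow> real \<Rightarrow> complex) \<times> (vertex \<Rightarrow> complex)"

definition sq_int :: "(real \<Rightarrow> complex) \<Rightarrow> bool" where
  "sq_int f \<longleftrightarrow> f absolutely_integrable_on {0..1} \<and> (\<lambda>t. (cmod (f t))\<^sup>2) integrable_on {0..1}"

definition deriv01 :: "(real \<Rightarrow> complex) \<Rightarrow> real \<Rightarrow> complex" where
  "deriv01 f t = vector_derivative f (at t within {0..1})"

text \<open>f \<in> H^2(0,1) with (weak) second derivative g: f is C^1 on [0,1], f' is the
  integral of g, and g is square integrable.\<close>

definition H2_rep :: "(real \<Rightarrow> complex) \<Rightarrow> (real \<Rightarrow> complex) \<Rightarrow> bool" where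
  "H2_rep f g \<longleftrightarrow>
     (\<forall>t\<in>{0..1}. (f has_vector_derivative deriv01 f t) (at t within {0..1})) \<and>
     sq_int g \<and>
     (\<forall>t\<in>{0..1}. deriv01 f t = deriv01 f 0 + integral {0..t} g)"

definition H2_normsq :: "(real \<Rightarrow> complex) \<Rightarrow> (real \<Rightarrow> complex) \<Rightarrow> real" where
  "H2_normsq f g = integral {0..1} (\<lambda>t. (cmod (f t))\<^sup>2 + (cmod (deriv01 f t))\<^sup>2 + (cmod (g t))\<^sup>2)"

definition vval :: "(edge \<Rightarrow> real \<Rightarrow> complex) \<Rightarrow> edge \<Rightarrow> vertex \<Rightarrow> complex" where
  "vval u e v = (if v = tailv e then u e 0 else u e 1)"

text \<open>Outward normal derivative at the endpoint v of e.\<close>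
definition dnorm :: "(edge \<Rightarrow> real \<Rightarrow> complex) \<Rightarrow> edge \<Rightarrow> vertex \<Rightarrow> complex" where
  "dnorm u e v = (if v = tailv e then - deriv01 (u e) 0 else deriv01 (u e) 1)"

definition in_H :: "state \<Rightarrow> bool" where
  "in_H x \<longleftrightarrow> (\<forall>e. sq_int (fst x e)) \<and>
     (\<lambda>e. integral {0..1} (\<lambda>t. (cmod (fst x e t))\<^sup>2)) summable_on UNIV \<and>
     (\<lambda>v. (cmod (snd x v))\<^sup>2) summable_on UNIV"

definition hnormsq :: "real \<Rightarrow> state \<Rightarrow> real" where
  "hnormsq m x = (\<Sum>\<^sub>\<infinity>e. integral {0..1} (\<lambda>t. (cmod (fst x e t))\<^sup>2))
                + m * (\<Sum>\<^sub>\<infinity>v. (cmod (snd x v))\<^sup>2)"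

definition sdiff :: "state \<Rightarrow> state \<Rightarrow> state" where
  "sdiff x y = ((\<lambda>e t. fst x e t - fst y e t), (\<lambda>v. snd x v - snd y v))"

definition lincomb :: "state set \<Rightarrow> (state \<Rightarrow> complex) \<Rightarrow> state" where
  "lincomb F c = ((\<lambda>e t. \<Sum>f\<in>F. c f * fst f e t), (\<lambda>v. \<Sum>f\<in>F. c f * snd f v))"

definition in_cspan :: "real \<Rightarrow> state set \<Rightarrow> state \<Rightarrow> bool" where
  "in_cspan m S x \<longleftrightarrow> (\<forall>\<epsilon>>0. \<exists>F c. finite F \<and> F \<subseteq> S \<and> hnormsq m (sdiff x (lincomb F c)) < \<epsilon>)"

text \<open>Domain of A_0 with witness g for the second derivatives u_e''.
  For m>0: u_e(v) + \<rho> \<partial>_n u_e(v) = \<omega>_v.  For m=0 the vertex component \<omega>_v is just the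
  common value of u_e(v) + \<rho> \<partial>_n u_e(v), and the Kirchhoff condition is imposed.\<close>
definition A0_dom_wit :: "real \<Rightarrow> real \<Rightarrow> real \<Rightarrow> state \<Rightarrow> (edge \<Rightarrow> real \<Rightarrow> complex) \<Rightarrow> bool" where
  "A0_dom_wit a kinv m x g \<longleftrightarrow>
     (\<forall>e. H2_rep (fst x e) (g e)) \<and>
     (\<lambda>e. H2_normsq (fst x e) (g e)) summable_on UNIV \<and>
     (\<lambda>v. (cmod (snd x v))\<^sup>2) summable_on UNIV \<and>
     (\<forall>v. \<forall>e\<in>incident v. vval (fst x) e v + of_real (a * kinv) * dnorm (fst x) e v = snd x v) \<and>
     (m = 0 \<longrightarrow> (\<forall>v. (\<Sum>e\<in>incident v. dnorm (fst x) e v) = 0))"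

text \<open>Eigenvectors of A_0 for the eigenvalue \<lambda> (the zero vector included):
  x \<in> dom A_0 and A_0 x = \<lambda> x.\<close>
definition A0_eig :: "real \<Rightarrow> real \<Rightarrow> real \<Rightarrow> real \<Rightarrow> state set" where
  "A0_eig a kinv m lam = {x. \<exists>g. A0_dom_wit a kinv m x g \<and>
     (\<forall>e. AE t in lebesgue. t \<in> {0..1} \<longrightarrow> - of_real a * g e t = of_real lam * fst x e t) \<and>
     (m > 0 \<longrightarrow> (\<forall>v. of_real (a / m) * (\<Sum>e\<in>incident v. dnorm (fst x) e v) = of_real lam * snd x v))}"

text \<open>Eigenvalue of infinite multiplicity: the eigenspace is not finite dimensional
  (no finite set of eigenvectors spans it, up to Hilbert-space null vectors).\<close>
definition inf_mult_eigenvalue :: "real \<Rightarrow> real \<Rightarrow> real \<Rightarrow> real \<Rightarrow> bool" where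
  "inf_mult_eigenvalue a kinv m lam \<longleftrightarrow>
     \<not> (\<exists>B. finite B \<and> B \<subseteq> A0_eig a kinv m lam \<and>
           (\<forall>x\<in>A0_eig a kinv m lam. \<exists>c. hnormsq m (sdiff x (lincomb B c)) = 0))"

definition loop_states :: "real \<Rightarrow> real \<Rightarrow> real \<Rightarrow> real \<Rightarrow> state set" where
  "loop_states a kinv m lam = {x \<in> A0_eig a kinv m lam. (\<forall>v. snd x v = 0) \<and>
     (\<exists>h. \<forall>e. e \<notin> hexagon h \<longrightarrow> (\<forall>t\<in>{0..1}. fst x e t = 0))}"

definition cosE :: "real \<Rightarrow> real" where
  "cosE z = (\<Sum>k. (- z) ^ k / fact (2 * k))"

definition sincE :: "real \<Rightarrow> real" where
  "sincE z = (\<Sum>k. (- z) ^ k / fact (2 * k + 1))"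

end

theory Submission
  imports Defs "HOL-Library.Function_Algebras"
begin

text \<open>On an edge, - a u'' = lam u forces u = A cos (k t) + B sin (k t) / k with k = sqrt (lam / a),
  because the secular equation has no root lam \<le> 0. The secular equation says precisely that the
  Robin data u + rho \<partial>u/\<partial>n at the head of an edge are sigma times those at its tail, where
  sigma = cos k - rho k sin k satisfies sigma^2 = 1. So \<bar>\<omega>\<bar> is constant on the lattice and
  square-summability forces \<omega> = 0; the eigenvectors are then exactly the states
  \<beta> e * phi t on edge e, with phi t = rho k cos (k t) + sin (k t) and \<beta> a square-summable
  divergence-free edge function, and a simple loop state is the case where \<beta> is the curl of the
  indicator of one hexagon.

  Divergence-free edge functions are curls of face potentials. In two dimensions a square-summable
  curl is the l^2-limit of curls of finitely supported potentials: clip the potential and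
  multiply it by a logarithmic cutoff, whose Dirichlet energy is O(1 / log N). Together with the
  orthogonal projection onto phi on each edge, this identifies the closed span of the loop states
  with the eigenspace. Infinitely many hexagons give infinitely many independent loop states.\<close>

section \<open>The secular equation has only positive roots\<close>

lemma cosE_eq_cos_sqrt:
  assumes "z > 0"
  shows "cosE z = cos (sqrt z)"
proof -
  have "(\<lambda>n. (- 1) ^ n / fact (2 * n) * sqrt z ^ (2 * n)) sums cos (sqrt z)"
    by (rule cos_paired)
  moreover have "(\<lambda>n. (- 1) ^ n / fact (2 * n) * sqrt z ^ (2 * n)) = (\<lambda>n. (- z) ^ n / fact (2 * n))"
    using assms by (auto simp: power_mult power_minus' intro!: ext)
  ultimately show ?thesis
    unfolding cosE_def by (simp add: sums_iff)
qed

lemma sincE_eq_sin_sqrt_div: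
  assumes "z > 0"
  shows "sincE z = sin (sqrt z) / sqrt z"
proof -
  have "(\<lambda>n. (- 1) ^ n / fact (2 * n + 1) * sqrt z ^ (2 * n + 1)) sums sin (sqrt z)"
    by (rule sin_paired)
  then have "(\<lambda>n. (- 1) ^ n / fact (2 * n + 1) * sqrt z ^ (2 * n + 1) / sqrt z) sums (sin (sqrt z) / sqrt z)"
    by (rule sums_divide)
  moreover have "(\<lambda>n. (- 1) ^ n / fact (2 * n + 1) * sqrt z ^ (2 * n + 1) / sqrt z) =
      (\<lambda>n. (- z) ^ n / fact (2 * n + 1))"
    using assms by (auto simp: power_mult power_minus' intro!: ext)
  ultimately show ?thesis
    unfolding sincE_def by (simp add: sums_iff)
qed

lemma suminf_power_div_fact_ge_1:
  fixes z :: real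
  assumes "z \<le> 0" and "d \<le> 1"
  shows "(\<Sum>k. (- z) ^ k / fact (2 * k + d)) \<ge> 1"
proof -
  have nonneg: "0 \<le> (- z) ^ k / fact (2 * k + d)" for k
    using assms by simp
  have "summable (\<lambda>k. (- z) ^ k / fact k)"
    using summable_exp_generic[of "- z"] by (simp add: divide_inverse_commute)
  then have "summable (\<lambda>k. (- z) ^ k / fact (2 * k + d))"
  proof (rule summable_comparison_test')
    fix k :: nat
    have "(fact k :: real) \<le> fact (2 * k + d)"
      by (rule fact_mono) auto
    then show "norm ((- z) ^ k / fact (2 * k + d)) \<le> (- z) ^ k / fact k"
      using assms by (simp only: real_norm_def abs_of_nonneg[OF nonneg]) (rule divide_left_mono, auto)
  qed
  then have "(\<Sum>k<1. (- z) ^ k / fact (2 * k + d)) \<le> (\<Sum>k. (- z) ^ k / fact (2 * k + d))"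
    using nonneg by (intro sum_le_suminf) auto
  moreover have "fact d = (1::real)"
    using assms(2) by (cases d) auto
  ultimately show ?thesis
    by simp
qed

lemma secular_root_pos:
  fixes a kinv lam :: real
  assumes "a > 0" and "kinv \<ge> 0"
    and "(1 - (a * kinv)\<^sup>2 * (lam / a)) * sincE (lam / a) + 2 * (a * kinv) * cosE (lam / a) = 0"
  shows "lam > 0"
proof (rule ccontr)
  assume "\<not> lam > 0"
  then have z: "lam / a \<le> 0"
    using assms(1) by (simp add: divide_nonpos_pos)
  have "sincE (lam / a) \<ge> 1" and "cosE (lam / a) \<ge> 1"
    using suminf_power_div_fact_ge_1[OF z, of 1] suminf_power_div_fact_ge_1[OF z, of 0]
    unfolding sincE_def cosE_def by simp_all
  moreover have "1 - (a * kinv)\<^sup>2 * (lam / a) \<ge> 1"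
    using z mult_nonneg_nonpos[of "(a * kinv)\<^sup>2" "lam / a"] by simp
  moreover have "a * kinv \<ge> 0"
    using assms by simp
  ultimately have "(1 - (a * kinv)\<^sup>2 * (lam / a)) * sincE (lam / a) + 2 * (a * kinv) * cosE (lam / a) \<ge> 1"
    by (smt (verit) mult_le_cancel_right1 mult_nonneg_nonneg)
  with assms(3) show False
    by simp
qed

section \<open>Curls and divergence-free edge functions on the hexagonal lattice\<close>

text \<open>The two hexagons containing an edge, in the labelling of hexagon, oriented so that every
  curl is divergence-free.\<close>

definition face_pos :: "edge \<Rightarrow> int \<times> int" where
  "face_pos e = (case e of (i, j, D0) \<Rightarrow> (i, j) | (i, j, D1) \<Rightarrow> (i, j - 1) | (i, j, D2) \<Rightarrow> (i + 1, j - 1))"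

definition face_neg :: "edge \<Rightarrow> int \<times> int" where
  "face_neg e = (case e of (i, j, D0) \<Rightarrow> (i + 1, j - 1) | (i, j, D1) \<Rightarrow> (i, j) | (i, j, D2) \<Rightarrow> (i, j - 1))"

definition curl :: "(int \<times> int \<Rightarrow> complex) \<Rightarrow> edge \<Rightarrow> complex" where
  "curl \<psi> e = \<psi> (face_pos e) - \<psi> (face_neg e)"

definition divergence_free :: "(edge \<Rightarrow> complex) \<Rightarrow> bool" where
  "divergence_free \<beta> \<longleftrightarrow> (\<forall>v. (\<Sum>e\<in>incident v. \<beta> e) = 0)"

lemma face_pos_simps [simp]:
  "face_pos (i, j, D0) = (i, j)" "face_pos (i, j, D1) = (i, j - 1)" "face_pos (i, j, D2) = (i + 1, j - 1)"
  by (simp_all add: face_pos_def)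

lemma face_neg_simps [simp]:
  "face_neg (i, j, D0) = (i + 1, j - 1)" "face_neg (i, j, D1) = (i, j)" "face_neg (i, j, D2) = (i, j - 1)"
  by (simp_all add: face_neg_def)

lemma tailv_simp [simp]: "tailv (i, j, d) = (i, j, False)"
  by (simp add: tailv_def)

lemma headv_simps [simp]:
  "headv (i, j, D0) = (i, j, True)" "headv (i, j, D1) = (i - 1, j, True)" "headv (i, j, D2) = (i, j - 1, True)"
  by (simp_all add: headv_def)

lemma headv_ne_tailv: "headv e \<noteq> tailv e"
  by (cases e rule: prod_cases3, rename_tac d, case_tac d) auto

lemma incident_A_vertex: "incident (i, j, False) = {(i, j, D0), (i, j, D1), (i, j, D2)}"
proof (rule set_eqI)
  fix e :: edge
  show "e \<in> incident (i, j, False) \<longleftrightarrow> e \<in> {(i, j, D0), (i, j, D1), (i, j, D2)}"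
    by (cases e rule: prod_cases3, rename_tac d, case_tac d) (auto simp: incident_def)
qed

lemma incident_B_vertex: "incident (i, j, True) = {(i, j, D0), (i + 1, j, D1), (i, j + 1, D2)}"
proof (rule set_eqI)
  fix e :: edge
  show "e \<in> incident (i, j, True) \<longleftrightarrow> e \<in> {(i, j, D0), (i + 1, j, D1), (i, j + 1, D2)}"
    by (cases e rule: prod_cases3, rename_tac d, case_tac d) (auto simp: incident_def)
qed

lemma card_incident_le: "card (incident v) \<le> 3"
  by (cases v rule: prod_cases3, rename_tac b, case_tac b)
     (simp_all add: incident_A_vertex incident_B_vertex card_insert_if)

lemma sum_incident_A_vertex:
  "(\<Sum>e\<in>incident (i, j, False). f e) = f (i, j, D0) + f (i, j, D1) + f (i, j, D2)"
  by (simp add: incident_A_vertex add.assoc)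

lemma sum_incident_B_vertex:
  "(\<Sum>e\<in>incident (i, j, True). f e) = f (i, j, D0) + f (i + 1, j, D1) + f (i, j + 1, D2)"
  by (simp add: incident_B_vertex add.assoc)

lemma divergence_free_iff:
  "divergence_free \<beta> \<longleftrightarrow> (\<forall>i j. \<beta> (i, j, D0) + \<beta> (i, j, D1) + \<beta> (i, j, D2) = 0 \<and>
     \<beta> (i, j, D0) + \<beta> (i + 1, j, D1) + \<beta> (i, j + 1, D2) = 0)"
  unfolding divergence_free_def
proof (intro iffI allI)
  fix i j
  assume "\<forall>v. sum \<beta> (incident v) = 0"
  then show "\<beta> (i, j, D0) + \<beta> (i, j, D1) + \<beta> (i, j, D2) = 0 \<and>
      \<beta> (i, j, D0) + \<beta> (i + 1, j, D1) + \<beta> (i, j + 1, D2) = 0"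
    by (metis sum_incident_A_vertex sum_incident_B_vertex)
next
  fix v :: vertex
  assume "\<forall>i j. \<beta> (i, j, D0) + \<beta> (i, j, D1) + \<beta> (i, j, D2) = 0 \<and>
      \<beta> (i, j, D0) + \<beta> (i + 1, j, D1) + \<beta> (i, j + 1, D2) = 0"
  then show "sum \<beta> (incident v) = 0"
    by (cases v rule: prod_cases3, rename_tac b, case_tac b)
       (simp_all only: sum_incident_A_vertex sum_incident_B_vertex)
qed

lemma divergence_free_curl: "divergence_free (curl \<psi>)"
  unfolding divergence_free_iff curl_def by simp

lemma divergence_free_sum:
  assumes "\<And>b. b \<in> B \<Longrightarrow> divergence_free (\<beta> b)"
  shows "divergence_free (\<lambda>e. \<Sum>b\<in>B. c b * \<beta> b e)"
  using assms unfolding divergence_free_def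
  by (simp add: sum_distrib_left[symmetric] sum.swap[of _ B])

lemma edge_in_hexagon_face_pos: "e \<in> hexagon (face_pos e)"
  by (cases e rule: prod_cases3, rename_tac d, case_tac d) (simp_all add: hexagon_def)

lemma edge_in_hexagon_face_neg: "e \<in> hexagon (face_neg e)"
  by (cases e rule: prod_cases3, rename_tac d, case_tac d) (simp_all add: hexagon_def)

lemma finite_hexagon: "finite (hexagon h)"
  by (cases h) (simp add: hexagon_def)

lemma shift_invariant_int_fun_eq_at_0:
  fixes f :: "int \<Rightarrow> 'a"
  assumes "\<And>i. f (i + 1) = f i"
  shows "f i = f 0"
proof (induct i rule: int_induct[where k = 0])
  case (step1 i)
  then show ?case using assms[of i] by simp
next
  case (step2 i)
  then show ?case using assms[of "i - 1"] by simp
qed simp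

definition int_partial_sum :: "(int \<Rightarrow> complex) \<Rightarrow> int \<Rightarrow> complex" where
  "int_partial_sum g n = (if n \<ge> 0 then \<Sum>k\<in>{0..<n}. g k else - (\<Sum>k\<in>{n..<0}. g k))"

lemma int_partial_sum_step: "int_partial_sum g (n + 1) = int_partial_sum g n + g n"
proof -
  consider "n \<ge> 0" | "n = -1" | "n < -1"
    by linarith
  then show ?thesis
  proof cases
    case 1
    then have "{0..<n + 1} = insert n {0..<n}" by auto
    with 1 show ?thesis by (simp add: int_partial_sum_def)
  next
    case 2
    then have "{n..<0} = {n}" by auto
    with 2 show ?thesis by (simp add: int_partial_sum_def)
  next
    case 3
    then have "{n..<0} = insert n {n + 1..<0}" by auto
    with 3 show ?thesis by (simp add: int_partial_sum_def)
  qed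
qed

text \<open>The potential sums the D2-edges along rows and the D1-edges along the column i = 0;
  the two Kirchhoff laws make the result path independent.\<close>

definition face_potential :: "(edge \<Rightarrow> complex) \<Rightarrow> int \<times> int \<Rightarrow> complex" where
  "face_potential \<beta> = (\<lambda>(i, j). int_partial_sum (\<lambda>k. \<beta> (k, j + 1, D2)) i
                                - int_partial_sum (\<lambda>k. \<beta> (0, k + 1, D1)) j)"

lemma face_potential_D2: "\<beta> (i, j, D2) = face_potential \<beta> (i + 1, j - 1) - face_potential \<beta> (i, j - 1)"
  by (simp add: face_potential_def int_partial_sum_step)

lemma face_potential_D1:
  assumes "divergence_free \<beta>"
  shows "\<beta> (i, j, D1) = face_potential \<beta> (i, j - 1) - face_potential \<beta> (i, j)"
proof -
  define \<Delta> where "\<Delta> i = face_potential \<beta> (i, j - 1) - face_potential \<beta> (i, j) - \<beta> (i, j, D1)" for i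
  have "\<Delta> (i + 1) = \<Delta> i" for i
  proof -
    have "\<beta> (i, j, D0) + (\<beta> (i + 1, j, D1) + \<beta> (i, j + 1, D2)) =
        \<beta> (i, j, D0) + (\<beta> (i, j, D1) + \<beta> (i, j, D2))"
      using assms unfolding divergence_free_iff by (simp add: add.assoc)
    then have "\<beta> (i + 1, j, D1) + \<beta> (i, j + 1, D2) = \<beta> (i, j, D1) + \<beta> (i, j, D2)"
      by (rule add_left_imp_eq)
    then have "\<beta> (i + 1, j, D1) = \<beta> (i, j, D1) + \<beta> (i, j, D2) - \<beta> (i, j + 1, D2)"
      by (metis eq_diff_eq)
    then show ?thesis
      unfolding \<Delta>_def face_potential_D2[of \<beta> i j] face_potential_D2[of \<beta> i "j + 1"]
      by (simp add: algebra_simps)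
  qed
  moreover have "\<Delta> 0 = 0"
    using int_partial_sum_step[of "\<lambda>k. \<beta> (0, k + 1, D1)" "j - 1"]
    unfolding \<Delta>_def face_potential_def by (simp add: int_partial_sum_def)
  ultimately have "\<Delta> i = 0"
    using shift_invariant_int_fun_eq_at_0[of \<Delta>] by metis
  then show ?thesis
    unfolding \<Delta>_def by simp
qed

lemma divergence_free_imp_curl:
  assumes "divergence_free \<beta>"
  shows "\<beta> = curl (face_potential \<beta>)"
proof
  fix e :: edge
  have "\<beta> (i, j, D0) = face_potential \<beta> (i, j) - face_potential \<beta> (i + 1, j - 1)" for i j
  proof -
    have "\<beta> (i, j, D0) + (\<beta> (i, j, D1) + \<beta> (i, j, D2)) = 0"
      using assms unfolding divergence_free_iff by (simp add: add.assoc)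
    then have "\<beta> (i, j, D0) = - (\<beta> (i, j, D1) + \<beta> (i, j, D2))"
      by (simp add: add_eq_0_iff2)
    then show ?thesis
      unfolding face_potential_D1[OF assms, of i j] face_potential_D2[of \<beta> i j]
      by (simp add: algebra_simps)
  qed
  then show "\<beta> e = curl (face_potential \<beta>) e"
    using face_potential_D1[OF assms] face_potential_D2[of \<beta>]
    by (cases e rule: prod_cases3, rename_tac d, case_tac d) (simp_all add: curl_def)
qed

lemma edge_mem_incident_tailv: "e \<in> incident (tailv e)"
  by (simp add: incident_def)

lemma edge_mem_incident_headv: "e \<in> incident (headv e)"
  by (simp add: incident_def)

lemma vval_tailv: "vval u e (tailv e) = u e 0"
  by (simp add: vval_def)

lemma vval_headv: "vval u e (headv e) = u e 1"
  using headv_ne_tailv by (simp add: vval_def)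

lemma dnorm_tailv: "dnorm u e (tailv e) = - deriv01 (u e) 0"
  by (simp add: dnorm_def)

lemma dnorm_headv: "dnorm u e (headv e) = deriv01 (u e) 1"
  using headv_ne_tailv by (simp add: dnorm_def)

lemma tailv_ne_B_vertex: "tailv e \<noteq> (i, j, True)"
  by (cases e rule: prod_cases3) simp

lemma tailv_eq_A_vertex: "e \<in> incident (i, j, False) \<Longrightarrow> tailv e = (i, j, False)"
  by (auto simp: incident_A_vertex)

definition face_delta :: "int \<times> int \<Rightarrow> int \<times> int \<Rightarrow> complex" where
  "face_delta h p = (if p = h then 1 else 0)"

lemma curl_face_delta_eq_0: "e \<notin> hexagon h \<Longrightarrow> curl (face_delta h) e = 0"
  using edge_in_hexagon_face_pos[of e] edge_in_hexagon_face_neg[of e]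
  by (auto simp: curl_def face_delta_def)

lemma finite_curl_face_delta_support: "finite {e. curl (face_delta h) e \<noteq> 0}"
  by (rule finite_subset[OF _ finite_hexagon[of h]]) (use curl_face_delta_eq_0 in blast)

lemma curl_face_delta_D0:
  "curl (face_delta h) (i, j, D0) = (if h = (i, j) then 1 else if h = (i + 1, j - 1) then - 1 else 0)"
  by (auto simp: curl_def face_delta_def)

lemma curl_eq_sum_face_delta:
  assumes "finite H" and "\<And>h. h \<notin> H \<Longrightarrow> \<psi> h = 0"
  shows "curl \<psi> e = (\<Sum>h\<in>H. \<psi> h * curl (face_delta h) e)"
proof -
  have "(\<Sum>h\<in>H. \<psi> h * face_delta h p) = \<psi> p" for p
    using assms by (cases "p \<in> H") (simp_all add: face_delta_def if_distrib sum.delta' cong: if_cong)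
  then show ?thesis
    unfolding curl_def by (simp add: right_diff_distrib sum_subtractf)
qed

lemma vertex_values_vanish:
  fixes \<omega> :: "vertex \<Rightarrow> complex"
  assumes hop: "\<And>e. cmod (\<omega> (headv e)) = cmod (\<omega> (tailv e))"
    and l2: "(\<lambda>v. (cmod (\<omega> v))\<^sup>2) summable_on UNIV"
  shows "\<omega> v = 0"
proof -
  define w where "w i j = cmod (\<omega> (i, j, False))" for i j
  have B: "cmod (\<omega> (i, j, True)) = w i j" for i j
    using hop[of "(i, j, D0)"] by (simp add: w_def)
  have "w (i + 1) j = w i j" for i j
    using hop[of "(i + 1, j, D1)"] B[of i j] by (simp add: w_def)
  then have wi: "w i j = w 0 j" for i j
    using shift_invariant_int_fun_eq_at_0[of "\<lambda>i. w i j"] by blast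
  have "w i (j + 1) = w i j" for i j
    using hop[of "(i, j + 1, D2)"] B[of i j] by (simp add: w_def)
  then have wj: "w 0 j = w 0 0" for j
    using shift_invariant_int_fun_eq_at_0[of "\<lambda>j. w 0 j"] by blast
  have const: "cmod (\<omega> u) = w 0 0" for u
  proof (cases u rule: prod_cases3)
    case (fields i j b)
    then show ?thesis
      using wi[of i j] wj[of j] B[of i j] by (cases b) (simp_all add: w_def)
  qed
  have "infinite (UNIV :: vertex set)"
    by (simp add: finite_prod)
  then have "(w 0 0)\<^sup>2 = 0"
    using l2 infsum_diverge_constant[of "UNIV :: vertex set" "(w 0 0)\<^sup>2"] unfolding const by blast
  then show ?thesis
    using const[of v] by simp
qed

section \<open>Approximating divergence-free functions by curls of finitely supported potentials\<close>

definition clip_real :: "real \<Rightarrow> real \<Rightarrow> real" where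
  "clip_real M r = max (- M) (min M r)"

definition clip_complex :: "real \<Rightarrow> complex \<Rightarrow> complex" where
  "clip_complex M z = Complex (clip_real M (Re z)) (clip_real M (Im z))"

lemma cmod_le_if_components_le:
  assumes "\<bar>Re z\<bar> \<le> \<bar>Re w\<bar>" and "\<bar>Im z\<bar> \<le> \<bar>Im w\<bar>"
  shows "cmod z \<le> cmod w"
  unfolding cmod_def using assms by (intro real_sqrt_le_mono add_mono) (simp_all add: abs_le_square_iff)

lemma clip_complex_lipschitz: "cmod (clip_complex M z - clip_complex M w) \<le> cmod (z - w)"
  by (rule cmod_le_if_components_le; simp add: clip_complex_def clip_real_def; linarith)

lemma clip_complex_remainder_lipschitz:
  "cmod ((z - clip_complex M z) - (w - clip_complex M w)) \<le> cmod (z - w)"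
  by (rule cmod_le_if_components_le; simp add: clip_complex_def clip_real_def; linarith)

lemma clip_complex_eq_self: "cmod z \<le> M \<Longrightarrow> clip_complex M z = z"
  using abs_Re_le_cmod[of z] abs_Im_le_cmod[of z]
  by (simp add: clip_complex_def clip_real_def complex_eq_iff)

lemma norm_clip_complex_le:
  assumes "M \<ge> 0"
  shows "cmod (clip_complex M z) \<le> 2 * M"
proof -
  have "cmod (clip_complex M z) \<le> \<bar>Re (clip_complex M z)\<bar> + \<bar>Im (clip_complex M z)\<bar>"
    by (rule cmod_le)
  also have "\<dots> \<le> M + M"
    using assms by (simp add: clip_complex_def clip_real_def)
  finally show ?thesis
    by simp
qed

definition lattice_norm :: "int \<times> int \<Rightarrow> nat" where
  "lattice_norm p = nat (max \<bar>fst p\<bar> \<bar>snd p\<bar>)"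

definition lattice_box :: "nat \<Rightarrow> (int \<times> int) set" where
  "lattice_box N = {- int N..int N} \<times> {- int N..int N}"

lemma lattice_norm_shift_le:
  "\<bar>i - i'\<bar> \<le> 1 \<Longrightarrow> \<bar>j - j'\<bar> \<le> 1 \<Longrightarrow> lattice_norm (i, j) \<le> Suc (lattice_norm (i', j'))"
  unfolding lattice_norm_def by (simp add: nat_le_iff max_def split: if_splits) linarith?

lemma lattice_norm_adjacent_faces:
  "lattice_norm (face_neg e) \<le> lattice_norm (face_pos e) + 1 \<and>
   lattice_norm (face_pos e) \<le> lattice_norm (face_neg e) + 1"
  by (cases e rule: prod_cases3, rename_tac d, case_tac d) (auto intro!: lattice_norm_shift_le)

lemma finite_lattice_box: "finite (lattice_box N)"
  by (simp add: lattice_box_def)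

lemma in_lattice_box: "lattice_norm p \<le> N \<Longrightarrow> p \<in> lattice_box N"
  by (cases p) (auto simp: lattice_box_def lattice_norm_def)

lemma card_lattice_sphere_le: "card {p \<in> lattice_box M. lattice_norm p = k} \<le> 8 * k + 4"
proof -
  define A where "A = ({- int k, int k} \<times> {- int k..int k}) \<union> ({- int k..int k} \<times> {- int k, int k})"
  have "{p \<in> lattice_box M. lattice_norm p = k} \<subseteq> A"
  proof
    fix p
    assume "p \<in> {p \<in> lattice_box M. lattice_norm p = k}"
    then have "max \<bar>fst p\<bar> \<bar>snd p\<bar> = int k"
      by (simp add: lattice_norm_def) linarith
    then show "p \<in> A"
      unfolding A_def by (cases p) (auto simp: max_def split: if_splits)
  qed
  moreover have "card A \<le> 8 * k + 4"
  proof -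
    have two: "card {- int k, int k} \<le> 2"
      by (rule card_insert_le_m1) auto
    have "card A \<le> card ({- int k, int k} \<times> {- int k..int k}) + card ({- int k..int k} \<times> {- int k, int k})"
      unfolding A_def by (rule card_Un_le)
    also have "\<dots> \<le> 2 * (2 * k + 1) + (2 * k + 1) * 2"
      unfolding card_cartesian_product using two by (intro add_mono mult_mono) auto
    finally show ?thesis
      by simp
  qed
  moreover have "finite A"
    unfolding A_def by simp
  ultimately show ?thesis
    by (meson card_mono le_trans)
qed

definition edge_of_face :: "(int \<times> int) \<times> dir \<Rightarrow> edge" where
  "edge_of_face x = (case x of ((i, j), D0) \<Rightarrow> (i, j, D0) | ((i, j), D1) \<Rightarrow> (i, j + 1, D1)
                              | ((i, j), D2) \<Rightarrow> (i - 1, j + 1, D2))"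

lemma face_pos_edge_of_face: "face_pos (edge_of_face x) = fst x"
  by (cases x, rename_tac p d, case_tac p, case_tac d) (simp_all add: edge_of_face_def)

lemma edge_of_face_face_pos: "edge_of_face (face_pos e, snd (snd e)) = e"
  by (cases e rule: prod_cases3, rename_tac d, case_tac d) (simp_all add: edge_of_face_def)

lemma inj_edge_of_face: "inj edge_of_face"
proof (rule injI)
  fix x y :: "(int \<times> int) \<times> dir"
  assume "edge_of_face x = edge_of_face y"
  then show "x = y"
    by (cases x; cases y; rename_tac p d q d'; case_tac d; case_tac d')
       (auto simp: edge_of_face_def split: prod.splits)
qed

lemma UNIV_dir: "(UNIV :: dir set) = {D0, D1, D2}"
  using dir.exhaust by auto

definition harm_block :: "nat \<Rightarrow> nat \<Rightarrow> real" where
  "harm_block R N = (\<Sum>j\<in>{R..<N}. 1 / real (j + 1))"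

text \<open>The logarithmic cutoff is 1 up to level R and 0 from level N on, and drops by
  1 / ((k + 1) H) from level k to level k + 1 in between, where H = harm_block R N.
  Its Dirichlet energy on the lattice is O(1 / H), and H \<approx> ln (N / R) is unbounded in N.\<close>

definition log_cutoff :: "nat \<Rightarrow> nat \<Rightarrow> nat \<Rightarrow> real" where
  "log_cutoff R N k = (\<Sum>j\<in>{max k R..<N}. 1 / real (j + 1)) / harm_block R N"

definition cutoff_jump :: "nat \<Rightarrow> nat \<Rightarrow> nat \<Rightarrow> real" where
  "cutoff_jump R N k = (if R \<le> k \<and> k < N then 1 / (real (k + 1) * harm_block R N) else 0)"

definition face_cutoff :: "nat \<Rightarrow> nat \<Rightarrow> int \<times> int \<Rightarrow> real" where
  "face_cutoff R N p = log_cutoff R N (lattice_norm p)"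

definition level_jump_sq :: "nat \<Rightarrow> nat \<Rightarrow> nat \<Rightarrow> real" where
  "level_jump_sq R N k = (cutoff_jump R N k)\<^sup>2 + (if k = 0 then 0 else (cutoff_jump R N (k - 1))\<^sup>2)"

lemma harm_block_pos: "R < N \<Longrightarrow> harm_block R N > 0"
  unfolding harm_block_def by (intro sum_pos) auto

lemma harm_block_unbounded: "\<exists>N. R < N \<and> T \<le> harm_block R N"
proof -
  have "\<forall>\<^sub>F n in sequentially. T + harm R \<le> (harm n :: real)"
    using harm_at_top unfolding filterlim_at_top by blast
  then obtain N0 where N0: "\<And>n. n \<ge> N0 \<Longrightarrow> T + harm R \<le> (harm n :: real)"
    unfolding eventually_sequentially by blast
  define N where "N = max N0 (R + 1)"
  have "R < N"
    unfolding N_def by simp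
  then have "{..<N} = {..<R} \<union> {R..<N}"
    by auto
  then have "(\<Sum>j<N. 1 / real (j + 1)) = (\<Sum>j<R. 1 / real (j + 1)) + harm_block R N"
    unfolding harm_block_def
    by (metis finite_lessThan finite_atLeastLessThan sum.union_disjoint ivl_disj_int_one(2))
  then have "harm N = (harm R :: real) + harm_block R N"
    by (simp add: harm_altdef inverse_eq_divide add.commute)
  moreover have "T + harm R \<le> (harm N :: real)"
    using N0[of N] unfolding N_def by simp
  ultimately show ?thesis
    using \<open>R < N\<close> by auto
qed

lemma log_cutoff_diff_Suc: "log_cutoff R N k - log_cutoff R N (Suc k) = cutoff_jump R N k"
proof (cases "R \<le> k \<and> k < N")
  case True
  then have "{max k R..<N} = insert k {max (Suc k) R..<N}"
    by auto
  then show ?thesis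
    using True by (simp add: log_cutoff_def cutoff_jump_def diff_divide_distrib[symmetric])
next
  case False
  then have "{max k R..<N} = {max (Suc k) R..<N}"
    by auto
  then have "log_cutoff R N k = log_cutoff R N (Suc k)"
    unfolding log_cutoff_def by simp
  then show ?thesis
    using False by (auto simp: cutoff_jump_def)
qed

lemma log_cutoff_eq_1: "k \<le> R \<Longrightarrow> R < N \<Longrightarrow> log_cutoff R N k = 1"
  using harm_block_pos[of R N] by (simp add: log_cutoff_def harm_block_def max_absorb2)

lemma log_cutoff_eq_0: "N \<le> k \<Longrightarrow> log_cutoff R N k = 0"
  by (simp add: log_cutoff_def)

lemma log_cutoff_bounds:
  assumes "R < N"
  shows "0 \<le> log_cutoff R N k \<and> log_cutoff R N k \<le> 1"
proof -
  have "(\<Sum>j\<in>{max k R..<N}. 1 / real (j + 1)) \<le> (\<Sum>j\<in>{R..<N}. 1 / real (j + 1))"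
    by (intro sum_mono2) auto
  then show ?thesis
    using harm_block_pos[OF assms] unfolding log_cutoff_def harm_block_def
    by (simp add: sum_nonneg divide_le_eq_1)
qed

lemma cutoff_jump_eq_0: "N \<le> k \<Longrightarrow> cutoff_jump R N k = 0"
  by (simp add: cutoff_jump_def)

lemma finite_face_cutoff_support: "finite {p. face_cutoff R N p \<noteq> 0}"
proof (rule finite_subset[OF _ finite_lattice_box[of N]])
  show "{p. face_cutoff R N p \<noteq> 0} \<subseteq> lattice_box N"
  proof
    fix p
    assume "p \<in> {p. face_cutoff R N p \<noteq> 0}"
    then have "\<not> N \<le> lattice_norm p"
      using log_cutoff_eq_0 by (auto simp: face_cutoff_def)
    then show "p \<in> lattice_box N"
      by (intro in_lattice_box) simp
  qed
qed

lemma face_cutoff_edge_jump_sq: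
  "(face_cutoff R N (face_pos e) - face_cutoff R N (face_neg e))\<^sup>2 \<le> level_jump_sq R N (lattice_norm (face_pos e))"
proof -
  define k l where "k = lattice_norm (face_pos e)" and "l = lattice_norm (face_neg e)"
  consider "l = k" | "l = Suc k" | "k = Suc l"
    using lattice_norm_adjacent_faces[of e] unfolding k_def l_def by linarith
  then have "(log_cutoff R N k - log_cutoff R N l)\<^sup>2 \<le> level_jump_sq R N k"
  proof cases
    case 2
    then show ?thesis
      using log_cutoff_diff_Suc[of R N k] by (simp add: level_jump_sq_def)
  next
    case 3
    then show ?thesis
      using log_cutoff_diff_Suc[of R N l] by (simp add: level_jump_sq_def power2_commute)
  qed (simp add: level_jump_sq_def)
  then show ?thesis
    unfolding face_cutoff_def k_def l_def .
qed

lemma weighted_cutoff_jump_sq: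
  "real (k + 1) * (cutoff_jump R N k)\<^sup>2 =
    (if R \<le> k \<and> k < N then 1 / (real (k + 1) * (harm_block R N)\<^sup>2) else 0)"
proof -
  have "K * (1 / (K * H))\<^sup>2 = 1 / (K * H\<^sup>2)" if "K > 0" for K H :: real
    using that by (simp add: power2_eq_square)
  then show ?thesis
    unfolding cutoff_jump_def by simp
qed

lemma weighted_level_jump_sq_sum:
  assumes "R < N"
  shows "(\<Sum>k\<le>N+1. (8 * real k + 4) * level_jump_sq R N k) = 16 / harm_block R N"
proof -
  define H where "H = harm_block R N"
  have "(\<Sum>k\<le>N+1. (8 * real k + 4) * level_jump_sq R N k) =
        (\<Sum>k\<le>N+1. (8 * real k + 4) * (cutoff_jump R N k)\<^sup>2) +
        (\<Sum>k\<le>N+1. (8 * real k + 4) * (if k = 0 then 0 else (cutoff_jump R N (k - 1))\<^sup>2))"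
    by (simp add: level_jump_sq_def distrib_left sum.distrib)
  also have "\<dots> = (\<Sum>k\<le>N+1. (8 * real k + 4) * (cutoff_jump R N k)\<^sup>2) +
      (\<Sum>k\<le>N. (8 * real k + 12) * (cutoff_jump R N k)\<^sup>2)"
    by (simp only: Suc_eq_plus1[symmetric] sum.atMost_Suc_shift) (simp add: algebra_simps)
  also have "\<dots> = (\<Sum>k<N. 16 * (real (k + 1) * (cutoff_jump R N k)\<^sup>2))"
    by (subst (1 2) sum.mono_neutral_right[of _ "{..<N}"])
       (auto simp: cutoff_jump_eq_0 sum.distrib[symmetric] algebra_simps intro!: sum.cong)
  also have "\<dots> = (\<Sum>k\<in>{R..<N}. 16 * (1 / real (k + 1)) / H\<^sup>2)"
    unfolding weighted_cutoff_jump_sq H_def by (rule sum.mono_neutral_cong_right) auto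
  also have "\<dots> = 16 / H"
    using harm_block_pos[OF assms]
    unfolding sum_divide_distrib[symmetric] sum_distrib_left[symmetric] harm_block_def[symmetric] H_def
    by (simp add: power2_eq_square)
  finally show ?thesis
    unfolding H_def .
qed

lemma sum_lattice_box_level_jump_sq:
  assumes "R < N"
  shows "(\<Sum>p\<in>lattice_box (N + 1). level_jump_sq R N (lattice_norm p)) \<le> 16 / harm_block R N"
proof -
  have "(\<Sum>p\<in>lattice_box (N + 1). level_jump_sq R N (lattice_norm p)) =
      (\<Sum>k\<le>N+1. \<Sum>p\<in>{p \<in> lattice_box (N + 1). lattice_norm p = k}. level_jump_sq R N (lattice_norm p))"
    by (rule sum.group[symmetric]) (auto simp: finite_lattice_box lattice_box_def lattice_norm_def)
  also have "\<dots> = (\<Sum>k\<le>N+1. real (card {p \<in> lattice_box (N + 1). lattice_norm p = k}) * level_jump_sq R N k)"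
    by (rule sum.cong) auto
  also have "\<dots> \<le> (\<Sum>k\<le>N+1. (8 * real k + 4) * level_jump_sq R N k)"
  proof (rule sum_mono)
    fix k
    have "real (card {p \<in> lattice_box (N + 1). lattice_norm p = k}) \<le> 8 * real k + 4"
      using card_lattice_sphere_le[of "N + 1" k] by linarith
    then show "real (card {p \<in> lattice_box (N + 1). lattice_norm p = k}) * level_jump_sq R N k
        \<le> (8 * real k + 4) * level_jump_sq R N k"
      by (rule mult_right_mono) (simp add: level_jump_sq_def)
  qed
  also have "\<dots> = 16 / harm_block R N"
    by (rule weighted_level_jump_sq_sum[OF assms])
  finally show ?thesis .
qed

lemma face_cutoff_energy:
  assumes "R < N"
  defines "w \<equiv> \<lambda>e. (face_cutoff R N (face_pos e) - face_cutoff R N (face_neg e))\<^sup>2"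
  shows "w summable_on UNIV" and "infsum w UNIV \<le> 48 / harm_block R N"
proof -
  define E where "E = edge_of_face ` (lattice_box (N + 1) \<times> UNIV)"
  have "finite E"
    unfolding E_def using finite_lattice_box by (simp add: UNIV_dir)
  have outside: "w e = 0" if "e \<notin> E" for e
  proof -
    have "face_pos e \<notin> lattice_box (N + 1)"
      using that edge_of_face_face_pos[of e] unfolding E_def by (metis SigmaI UNIV_I image_eqI)
    then have "N + 1 < lattice_norm (face_pos e)"
      using in_lattice_box by (meson not_le)
    then have "N \<le> lattice_norm (face_pos e)" and "N \<le> lattice_norm (face_neg e)"
      using lattice_norm_adjacent_faces[of e] by auto
    then show ?thesis
      unfolding w_def face_cutoff_def by (simp add: log_cutoff_eq_0)
  qed
  show "w summable_on UNIV"
    by (rule finite_nonzero_values_imp_summable_on, rule finite_subset[OF _ \<open>finite E\<close>])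
       (use outside in auto)
  have "infsum w UNIV = infsum w E"
    by (rule infsum_cong_neutral) (use outside in auto)
  also have "\<dots> = sum w E"
    using \<open>finite E\<close> by simp
  also have "\<dots> \<le> (\<Sum>e\<in>E. level_jump_sq R N (lattice_norm (face_pos e)))"
    unfolding w_def by (rule sum_mono) (rule face_cutoff_edge_jump_sq)
  also have "\<dots> = (\<Sum>x\<in>lattice_box (N + 1) \<times> (UNIV :: dir set). level_jump_sq R N (lattice_norm (fst x)))"
    unfolding E_def using inj_edge_of_face
    by (subst sum.reindex) (auto simp: inj_on_def face_pos_edge_of_face)
  also have "\<dots> = 3 * (\<Sum>p\<in>lattice_box (N + 1). level_jump_sq R N (lattice_norm p))"
    by (simp add: sum.cartesian_product' UNIV_dir sum_distrib_left)
  also have "\<dots> \<le> 48 / harm_block R N"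
    using sum_lattice_box_level_jump_sq[OF assms(1)] by simp
  finally show "infsum w UNIV \<le> 48 / harm_block R N" .
qed

lemma clipped_cutoff_diff_bound:
  fixes z w :: complex and cz cw M :: real
  assumes "M \<ge> 0" and "0 \<le> cz" and "cz \<le> 1"
  shows "(cmod ((z - w) - (of_real cz * clip_complex M z - of_real cw * clip_complex M w)))\<^sup>2
    \<le> 6 * (cmod (z - w))\<^sup>2 + 12 * M\<^sup>2 * (cz - cw)\<^sup>2"
proof -
  define A B C where "A = (z - clip_complex M z) - (w - clip_complex M w)"
    and "B = of_real (1 - cz) * (clip_complex M z - clip_complex M w)"
    and "C = of_real (cw - cz) * clip_complex M w"
  have "(z - w) - (of_real cz * clip_complex M z - of_real cw * clip_complex M w) = A + B + C"
    unfolding A_def B_def C_def by (simp add: algebra_simps)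
  have A: "cmod A \<le> cmod (z - w)"
    unfolding A_def by (rule clip_complex_remainder_lipschitz)
  have B: "cmod B \<le> cmod (z - w)"
  proof -
    have "cmod B \<le> cmod (clip_complex M z - clip_complex M w)"
      unfolding B_def norm_mult norm_of_real using assms by (simp add: mult_left_le_one_le)
    then show ?thesis
      using clip_complex_lipschitz[of M z w] by linarith
  qed
  have C: "cmod C \<le> \<bar>cz - cw\<bar> * (2 * M)"
    unfolding C_def norm_mult norm_of_real using assms norm_clip_complex_le[of M w]
    by (simp add: abs_minus_commute mult_left_mono)
  have "(cmod (A + B + C))\<^sup>2 \<le> (cmod A + cmod B + cmod C)\<^sup>2"
    using norm_triangle_ineq[of "A + B" C] norm_triangle_ineq[of A B] by (intro power_mono) auto
  also have "\<dots> \<le> 3 * ((cmod A)\<^sup>2 + (cmod B)\<^sup>2 + (cmod C)\<^sup>2)"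
    using sum_squares_ge_zero[of "cmod A - cmod B" "cmod B - cmod C"] sum_squares_ge_zero[of "cmod A - cmod C" 0]
    by (simp add: power2_eq_square algebra_simps)
  also have "\<dots> \<le> 3 * ((cmod (z - w))\<^sup>2 + (cmod (z - w))\<^sup>2 + (\<bar>cz - cw\<bar> * (2 * M))\<^sup>2)"
    using A B C by (intro mult_left_mono add_mono power_mono) auto
  also have "\<dots> = 6 * (cmod (z - w))\<^sup>2 + 12 * M\<^sup>2 * (cz - cw)\<^sup>2"
    by (simp add: power_mult_distrib algebra_simps)
  finally show ?thesis
    using \<open>_ = A + B + C\<close> by simp
qed

lemma clipped_cutoff_diff_bound_inner:
  fixes z w :: complex and cw M :: real
  assumes "cmod z \<le> M" and "cmod w \<le> M" and "0 \<le> cw" and "cw \<le> 1"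
  shows "(cmod ((z - w) - (z - of_real cw * clip_complex M w)))\<^sup>2 \<le> 12 * M\<^sup>2 * (1 - cw)\<^sup>2"
proof -
  have "(z - w) - (z - of_real cw * clip_complex M w) = of_real (cw - 1) * w"
    using assms by (simp add: clip_complex_eq_self algebra_simps)
  then have "cmod ((z - w) - (z - of_real cw * clip_complex M w)) = \<bar>cw - 1\<bar> * cmod w"
    by (simp only: norm_mult norm_of_real)
  also have "\<dots> = (1 - cw) * cmod w"
    using assms by simp
  also have "\<dots> \<le> (1 - cw) * M"
    using assms by (intro mult_left_mono) auto
  finally have "(cmod ((z - w) - (z - of_real cw * clip_complex M w)))\<^sup>2 \<le> ((1 - cw) * M)\<^sup>2"
    by (intro power_mono) auto
  moreover have "((1 - cw) * M)\<^sup>2 = M\<^sup>2 * (1 - cw)\<^sup>2"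
    by (simp add: power_mult_distrib)
  moreover have "0 \<le> M\<^sup>2 * (1 - cw)\<^sup>2"
    by simp
  ultimately show ?thesis
    by linarith
qed

text \<open>On the finite set S the clipping is inactive and the cutoff is 1 at face_pos, so only the
  energy of the cutoff is paid there; off S the error is controlled by the tail of the curl.\<close>

lemma curl_cutoff_clip_edge_bound:
  fixes P :: "int \<times> int \<Rightarrow> complex"
  assumes "R < N" and "M \<ge> 0"
    and inner: "e \<in> S \<Longrightarrow> cmod (P (face_pos e)) \<le> M \<and> cmod (P (face_neg e)) \<le> M \<and> lattice_norm (face_pos e) \<le> R"
  defines "\<psi> \<equiv> \<lambda>p. of_real (face_cutoff R N p) * clip_complex M (P p)"
  shows "(cmod (curl P e - curl \<psi> e))\<^sup>2 \<le> 6 * (if e \<in> S then 0 else (cmod (curl P e))\<^sup>2)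
    + 12 * M\<^sup>2 * (face_cutoff R N (face_pos e) - face_cutoff R N (face_neg e))\<^sup>2"
proof -
  have cutoff: "0 \<le> face_cutoff R N p \<and> face_cutoff R N p \<le> 1" for p
    unfolding face_cutoff_def using log_cutoff_bounds[OF \<open>R < N\<close>] by auto
  show ?thesis
  proof (cases "e \<in> S")
    case True
    then have "face_cutoff R N (face_pos e) = 1"
      using inner log_cutoff_eq_1[OF _ \<open>R < N\<close>] by (simp add: face_cutoff_def)
    then show ?thesis
      using clipped_cutoff_diff_bound_inner[of "P (face_pos e)" M "P (face_neg e)" "face_cutoff R N (face_neg e)"]
        inner[OF True] cutoff[of "face_neg e"] True
      by (simp add: curl_def \<psi>_def clip_complex_eq_self)
  next
    case False
    then show ?thesis
      using clipped_cutoff_diff_bound[OF \<open>M \<ge> 0\<close>, of "face_cutoff R N (face_pos e)"] cutoff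
      by (simp add: curl_def \<psi>_def)
  qed
qed

lemma curl_cutoff_clip_error:
  fixes P :: "int \<times> int \<Rightarrow> complex"
  assumes l2: "(\<lambda>e. (cmod (curl P e))\<^sup>2) summable_on UNIV" and "R < N" and "M \<ge> 0"
    and inner: "\<And>e. e \<in> S \<Longrightarrow>
      cmod (P (face_pos e)) \<le> M \<and> cmod (P (face_neg e)) \<le> M \<and> lattice_norm (face_pos e) \<le> R"
  defines "\<psi> \<equiv> \<lambda>p. of_real (face_cutoff R N p) * clip_complex M (P p)"
  shows "(\<lambda>e. (cmod (curl P e - curl \<psi> e))\<^sup>2) summable_on UNIV"
    and "infsum (\<lambda>e. (cmod (curl P e - curl \<psi> e))\<^sup>2) UNIV
      \<le> 6 * infsum (\<lambda>e. (cmod (curl P e))\<^sup>2) (- S) + 576 * M\<^sup>2 / harm_block R N"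
proof -
  define t where "t e = (if e \<in> S then 0 else (cmod (curl P e))\<^sup>2)" for e
  define w where "w e = (face_cutoff R N (face_pos e) - face_cutoff R N (face_neg e))\<^sup>2" for e
  have bound: "(cmod (curl P e - curl \<psi> e))\<^sup>2 \<le> 6 * t e + 12 * M\<^sup>2 * w e" for e
    unfolding t_def w_def \<psi>_def using curl_cutoff_clip_edge_bound[OF \<open>R < N\<close> \<open>M \<ge> 0\<close> inner] by blast
  have "t summable_on UNIV"
    by (rule summable_on_comparison_test[OF l2]) (auto simp: t_def)
  moreover have "w summable_on UNIV" and w_le: "infsum w UNIV \<le> 48 / harm_block R N"
    using face_cutoff_energy[OF \<open>R < N\<close>] unfolding w_def by auto
  ultimately have g: "(\<lambda>e. 6 * t e + 12 * M\<^sup>2 * w e) summable_on UNIV"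
    by (intro summable_on_add summable_on_cmult_right)
  then show sl: "(\<lambda>e. (cmod (curl P e - curl \<psi> e))\<^sup>2) summable_on UNIV"
    by (rule summable_on_comparison_test) (use bound in auto)
  have "infsum (\<lambda>e. (cmod (curl P e - curl \<psi> e))\<^sup>2) UNIV \<le> infsum (\<lambda>e. 6 * t e + 12 * M\<^sup>2 * w e) UNIV"
    by (rule infsum_mono[OF sl g]) (use bound in auto)
  also have "\<dots> = 6 * infsum t UNIV + 12 * M\<^sup>2 * infsum w UNIV"
    using \<open>t summable_on UNIV\<close> \<open>w summable_on UNIV\<close>
    by (subst infsum_add) (auto intro!: summable_on_cmult_right simp: infsum_cmult_right')
  also have "infsum t UNIV = infsum (\<lambda>e. (cmod (curl P e))\<^sup>2) (- S)"
    by (rule infsum_cong_neutral) (auto simp: t_def)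
  also have "12 * M\<^sup>2 * infsum w UNIV \<le> 12 * M\<^sup>2 * (48 / harm_block R N)"
    using w_le by (intro mult_left_mono) auto
  finally show "infsum (\<lambda>e. (cmod (curl P e - curl \<psi> e))\<^sup>2) UNIV
      \<le> 6 * infsum (\<lambda>e. (cmod (curl P e))\<^sup>2) (- S) + 576 * M\<^sup>2 / harm_block R N"
    by simp
qed

lemma summable_on_small_tail:
  fixes f :: "'a \<Rightarrow> real"
  assumes "f summable_on UNIV" and "\<delta> > 0"
  obtains S where "finite S" and "infsum f (- S) \<le> \<delta>"
proof -
  obtain S where S: "finite S" "dist (sum f S) (infsum f UNIV) \<le> \<delta>"
    using infsum_finite_approximation[OF assms] by blast
  have "infsum f UNIV = infsum f S + infsum f (- S)"
    using S(1) summable_on_subset[OF assms(1)] by (subst infsum_Un_disjoint[symmetric]) auto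
  with S show ?thesis
    using that by (auto simp: dist_real_def)
qed

lemma divergence_free_l2_approx_by_curls:
  assumes "divergence_free \<beta>" and l2: "(\<lambda>e. (cmod (\<beta> e))\<^sup>2) summable_on UNIV" and "\<epsilon> > 0"
  obtains \<psi> where "finite {p. \<psi> p \<noteq> 0}" and "(\<lambda>e. (cmod (\<beta> e - curl \<psi> e))\<^sup>2) summable_on UNIV"
    and "infsum (\<lambda>e. (cmod (\<beta> e - curl \<psi> e))\<^sup>2) UNIV < \<epsilon>"
proof -
  define P where "P = face_potential \<beta>"
  have \<beta>: "\<beta> = curl P"
    unfolding P_def by (rule divergence_free_imp_curl[OF assms(1)])
  obtain S where "finite S" and tail: "infsum (\<lambda>e. (cmod (\<beta> e))\<^sup>2) (- S) \<le> \<epsilon> / 24"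
    using summable_on_small_tail[OF l2, of "\<epsilon> / 24"] \<open>\<epsilon> > 0\<close> by auto
  define M where "M = 1 + (\<Sum>e\<in>S. cmod (P (face_pos e)) + cmod (P (face_neg e)))"
  define R where "R = (\<Sum>e\<in>S. lattice_norm (face_pos e))"
  have inner: "cmod (P (face_pos e)) \<le> M \<and> cmod (P (face_neg e)) \<le> M \<and> lattice_norm (face_pos e) \<le> R"
    if "e \<in> S" for e
  proof -
    have "cmod (P (face_pos e)) + cmod (P (face_neg e)) \<le> (\<Sum>e\<in>S. cmod (P (face_pos e)) + cmod (P (face_neg e)))"
      using \<open>finite S\<close> that by (intro member_le_sum) auto
    moreover have "lattice_norm (face_pos e) \<le> R"
      unfolding R_def using \<open>finite S\<close> that by (intro member_le_sum) auto
    ultimately show ?thesis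
      using norm_ge_zero[of "P (face_pos e)"] norm_ge_zero[of "P (face_neg e)"] unfolding M_def by linarith
  qed
  have "M \<ge> 1"
    unfolding M_def by (simp add: sum_nonneg)
  obtain N where "R < N" and H: "1152 * M\<^sup>2 / \<epsilon> \<le> harm_block R N"
    using harm_block_unbounded by blast
  define \<psi> where "\<psi> p = of_real (face_cutoff R N p) * clip_complex M (P p)" for p
  have "finite {p. \<psi> p \<noteq> 0}"
    by (rule finite_subset[OF _ finite_face_cutoff_support[of R N]]) (auto simp: \<psi>_def)
  moreover have "(\<lambda>e. (cmod (\<beta> e - curl \<psi> e))\<^sup>2) summable_on UNIV"
    and err: "infsum (\<lambda>e. (cmod (\<beta> e - curl \<psi> e))\<^sup>2) UNIV \<le> 6 * (\<epsilon> / 24) + 576 * M\<^sup>2 / harm_block R N"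
    using curl_cutoff_clip_error[of P R N M S] l2 tail inner \<open>R < N\<close> \<open>M \<ge> 1\<close>
    unfolding \<beta> \<psi>_def by force+
  moreover have "576 * M\<^sup>2 / harm_block R N \<le> \<epsilon> / 2"
    using H harm_block_pos[OF \<open>R < N\<close>] \<open>\<epsilon> > 0\<close> by (simp add: field_simps)
  ultimately show ?thesis
    using that \<open>\<epsilon> > 0\<close> by fastforce
qed

lemma divergence_free_if_l2_approx:
  assumes "\<And>\<epsilon>. \<epsilon> > 0 \<Longrightarrow> \<exists>\<gamma>. divergence_free \<gamma> \<and> (\<lambda>e. (cmod (\<beta> e - \<gamma> e))\<^sup>2) summable_on UNIV \<and>
      infsum (\<lambda>e. (cmod (\<beta> e - \<gamma> e))\<^sup>2) UNIV < \<epsilon>"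
  shows "divergence_free \<beta>"
  unfolding divergence_free_def
proof (rule allI, rule ccontr)
  fix v
  define d where "d = cmod (\<Sum>e\<in>incident v. \<beta> e)"
  assume "(\<Sum>e\<in>incident v. \<beta> e) \<noteq> 0"
  then have "d > 0"
    unfolding d_def by simp
  then obtain \<gamma> where "divergence_free \<gamma>" and sm: "(\<lambda>e. (cmod (\<beta> e - \<gamma> e))\<^sup>2) summable_on UNIV"
    and small: "infsum (\<lambda>e. (cmod (\<beta> e - \<gamma> e))\<^sup>2) UNIV < (d / 6)\<^sup>2"
    using assms[of "(d / 6)\<^sup>2"] by auto
  have close: "cmod (\<beta> e - \<gamma> e) \<le> d / 6" for e
  proof -
    have "(cmod (\<beta> e - \<gamma> e))\<^sup>2 \<le> infsum (\<lambda>e. (cmod (\<beta> e - \<gamma> e))\<^sup>2) UNIV"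
      using finite_sum_le_infsum[OF sm, of "{e}"] by simp
    with small have "(cmod (\<beta> e - \<gamma> e))\<^sup>2 \<le> (d / 6)\<^sup>2"
      by linarith
    then show ?thesis
      by (rule power2_le_imp_le) (use \<open>d > 0\<close> in simp)
  qed
  have "(\<Sum>e\<in>incident v. \<gamma> e) = 0"
    using \<open>divergence_free \<gamma>\<close> unfolding divergence_free_def by blast
  then have "d = cmod (\<Sum>e\<in>incident v. \<beta> e - \<gamma> e)"
    unfolding d_def by (simp add: sum_subtractf)
  also have "\<dots> \<le> (\<Sum>e\<in>incident v. cmod (\<beta> e - \<gamma> e))"
    by (rule norm_sum)
  also have "\<dots> \<le> real (card (incident v)) * (d / 6)"
    using sum_bounded_above[of "incident v" "\<lambda>e. cmod (\<beta> e - \<gamma> e)" "d / 6"] close by simp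
  also have "\<dots> \<le> 3 * (d / 6)"
    using card_incident_le[of v] \<open>d > 0\<close> by (intro mult_right_mono) auto
  finally show False
    using \<open>d > 0\<close> by simp
qed

section \<open>Square-summable edge functions and states\<close>

lemma norm_diff_sq_le:
  fixes z w :: "'a::real_normed_vector"
  shows "(norm (z - w))\<^sup>2 \<le> 2 * (norm z)\<^sup>2 + 2 * (norm w)\<^sup>2"
proof -
  have "(norm (z - w))\<^sup>2 \<le> (norm z + norm w)\<^sup>2"
    using norm_triangle_ineq4[of z w] by (intro power_mono) auto
  also have "\<dots> \<le> 2 * (norm z)\<^sup>2 + 2 * (norm w)\<^sup>2"
    using sum_squares_ge_zero[of "norm z - norm w" 0] by (simp add: power2_eq_square algebra_simps)
  finally show ?thesis .
qed

lemma summable_on_norm_diff_sq: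
  fixes f g :: "'b \<Rightarrow> 'a::real_normed_vector"
  assumes "(\<lambda>x. (norm (f x))\<^sup>2) summable_on A" and "(\<lambda>x. (norm (g x))\<^sup>2) summable_on A"
  shows "(\<lambda>x. (norm (f x - g x))\<^sup>2) summable_on A"
  by (rule summable_on_comparison_test[of "\<lambda>x. 2 * (norm (f x))\<^sup>2 + 2 * (norm (g x))\<^sup>2"])
     (use assms norm_diff_sq_le in \<open>auto intro!: summable_on_add summable_on_cmult_right\<close>)

lemma summable_on_norm_sum_sq:
  fixes f :: "'c \<Rightarrow> 'b \<Rightarrow> 'a::real_normed_vector"
  assumes "finite B" and "\<And>b. b \<in> B \<Longrightarrow> (\<lambda>x. (norm (f b x))\<^sup>2) summable_on A"
  shows "(\<lambda>x. (norm (\<Sum>b\<in>B. f b x))\<^sup>2) summable_on A"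
  using assms
proof (induction B rule: finite_induct)
  case (insert b B)
  then show ?case
    using summable_on_norm_diff_sq[of "f b" A "\<lambda>x. - (\<Sum>b\<in>B. f b x)"] by simp
qed simp

lemma fst_sdiff: "fst (sdiff x y) e t = fst x e t - fst y e t"
  by (simp add: sdiff_def)

lemma snd_sdiff: "snd (sdiff x y) v = snd x v - snd y v"
  by (simp add: sdiff_def)

lemma hnormsq_sdiff_cong:
  assumes "\<And>e t. t \<in> {0..1} \<Longrightarrow> fst y e t = fst y' e t" and "snd y = snd y'"
  shows "hnormsq m (sdiff x y) = hnormsq m (sdiff x y')"
proof -
  have "integral {0..1} (\<lambda>t. (cmod (fst (sdiff x y) e t))\<^sup>2) =
      integral {0..1} (\<lambda>t. (cmod (fst (sdiff x y') e t))\<^sup>2)" for e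
    using assms(1) by (intro Henstock_Kurzweil_Integration.integral_cong) (simp add: fst_sdiff)
  then show ?thesis
    unfolding hnormsq_def snd_sdiff assms(2) by simp
qed

lemma in_HD:
  assumes "in_H x"
  shows "sq_int (fst x e)" and "(\<lambda>e. integral {0..1} (\<lambda>t. (cmod (fst x e t))\<^sup>2)) summable_on UNIV"
    and "(\<lambda>v. (cmod (snd x v))\<^sup>2) summable_on UNIV"
  using assms unfolding in_H_def by blast+

lemma summable_on_norm_sq_eq_0D:
  fixes f :: "'b \<Rightarrow> 'a::real_normed_vector"
  assumes "(\<lambda>x. (norm (f x))\<^sup>2) summable_on A" and "infsum (\<lambda>x. (norm (f x))\<^sup>2) A = 0" and "x \<in> A"
  shows "f x = 0"
  using nonneg_infsum_le_0D[of "\<lambda>x. (norm (f x))\<^sup>2" A x] assms by simp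

section \<open>Independent curls of single hexagons\<close>

text \<open>HOL has no vector space instance for function types, so the complex scalar multiplication
  of edge functions is supplied explicitly.\<close>

definition scale_fun :: "complex \<Rightarrow> (edge \<Rightarrow> complex) \<Rightarrow> edge \<Rightarrow> complex" where
  "scale_fun c f = (\<lambda>e. c * f e)"

interpretation edge_fun: vector_space scale_fun
  by unfold_locales (auto simp: scale_fun_def algebra_simps fun_eq_iff)

lemma sum_fun_apply: "sum f S x = (\<Sum>i\<in>S. f i x)"
  by (induction S rule: infinite_finite_induct) auto

lemma curl_face_delta_column: "curl (face_delta (0, int n')) (0, int n, D0) = (if n' = n then 1 else 0)"
  by (simp add: curl_face_delta_D0)

lemma inj_column_curls: "inj (\<lambda>n::nat. curl (face_delta (0, int n)))"
proof (rule injI)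
  fix n n' :: nat
  assume "curl (face_delta (0, int n)) = curl (face_delta (0, int n'))"
  then have "curl (face_delta (0, int n)) (0, int n, D0) = curl (face_delta (0, int n')) (0, int n, D0)"
    by simp
  then show "n = n'"
    unfolding curl_face_delta_column by (simp split: if_splits)
qed

lemma independent_column_curls:
  assumes "finite N"
  shows "edge_fun.independent ((\<lambda>n::nat. curl (face_delta (0, int n))) ` N)"
proof (rule edge_fun.independent_if_scalars_zero)
  let ?S = "(\<lambda>n::nat. curl (face_delta (0, int n))) ` N"
  show "finite ?S"
    using assms by simp
  fix f and w :: "edge \<Rightarrow> complex"
  assume zero: "(\<Sum>y\<in>?S. scale_fun (f y) y) = 0" and "w \<in> ?S"
  then obtain n where w: "w = curl (face_delta (0, int n))"
    by blast
  have "0 = (\<Sum>y\<in>?S. f y * y (0, int n, D0))"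
    using fun_cong[OF zero, of "(0, int n, D0)"] by (simp add: sum_fun_apply scale_fun_def)
  also have "\<dots> = (\<Sum>y\<in>?S. if y = w then f y else 0)"
    using inj_column_curls unfolding w
    by (intro sum.cong) (auto simp: curl_face_delta_column inj_def split: if_splits)
  also have "\<dots> = f w"
    using \<open>w \<in> ?S\<close> \<open>finite ?S\<close> by (simp add: sum.delta')
  finally show "f w = 0"
    by simp
qed

section \<open>Eigenfunctions on a single edge\<close>

text \<open>The functions P and Q below are constant: they are the initial data (f 0, f' 0 / k)
  transported back along the rotation generated by the equation f'' = - k^2 f.\<close>

lemma harmonic_oscillator_solution:
  fixes f D :: "real \<Rightarrow> 'a::real_normed_vector" and k :: real
  assumes "k \<noteq> 0" and "convex S" and "0 \<in> S" and "t \<in> S"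
    and f': "\<And>u. u \<in> S \<Longrightarrow> (f has_vector_derivative D u) (at u within S)"
    and D': "\<And>u. u \<in> S \<Longrightarrow> (D has_vector_derivative (- k\<^sup>2 *\<^sub>R f u)) (at u within S)"
  shows "f t = cos (k * t) *\<^sub>R f 0 + (sin (k * t) / k) *\<^sub>R D 0"
    and "D t = (- k * sin (k * t)) *\<^sub>R f 0 + cos (k * t) *\<^sub>R D 0"
proof -
  define P where "P u = cos (k * u) *\<^sub>R f u - (sin (k * u) / k) *\<^sub>R D u" for u
  define Q where "Q u = sin (k * u) *\<^sub>R f u + (cos (k * u) / k) *\<^sub>R D u" for u
  have "(P has_vector_derivative 0) (at u within S)" if "u \<in> S" for u
  proof -
    have "(P has_vector_derivative (cos (k * u) *\<^sub>R D u + (- k * sin (k * u)) *\<^sub>R f u -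
        ((sin (k * u) / k) *\<^sub>R (- k\<^sup>2 *\<^sub>R f u) + cos (k * u) *\<^sub>R D u))) (at u within S)"
      unfolding P_def using \<open>k \<noteq> 0\<close>
      by (intro has_vector_derivative_diff has_vector_derivative_scaleR f' D' that)
         (auto intro!: derivative_eq_intros)
    then show ?thesis
      using \<open>k \<noteq> 0\<close> by (simp add: algebra_simps power2_eq_square)
  qed
  then obtain p where p: "\<And>u. u \<in> S \<Longrightarrow> P u = p"
    using has_vector_derivative_zero_constant[OF \<open>convex S\<close>] by metis
  have "(Q has_vector_derivative 0) (at u within S)" if "u \<in> S" for u
  proof -
    have "(Q has_vector_derivative (sin (k * u) *\<^sub>R D u + (k * cos (k * u)) *\<^sub>R f u +
        ((cos (k * u) / k) *\<^sub>R (- k\<^sup>2 *\<^sub>R f u) + (- sin (k * u)) *\<^sub>R D u))) (at u within S)"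
      unfolding Q_def using \<open>k \<noteq> 0\<close>
      by (intro has_vector_derivative_add has_vector_derivative_scaleR f' D' that)
         (auto intro!: derivative_eq_intros)
    then show ?thesis
      using \<open>k \<noteq> 0\<close> by (simp add: algebra_simps power2_eq_square)
  qed
  then obtain q where q: "\<And>u. u \<in> S \<Longrightarrow> Q u = q"
    using has_vector_derivative_zero_constant[OF \<open>convex S\<close>] by metis
  have P: "P t = f 0" and Q: "Q t = (1 / k) *\<^sub>R D 0"
    using p[OF \<open>t \<in> S\<close>] p[OF \<open>0 \<in> S\<close>] q[OF \<open>t \<in> S\<close>] q[OF \<open>0 \<in> S\<close>] by (simp_all add: P_def Q_def)
  have rot: "(cos x * cos x) *\<^sub>R v + (sin x * sin x) *\<^sub>R v = v" for x and v :: 'a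
    by (metis scaleR_add_left scaleR_one sin_cos_squared_add3)
  have "f t = cos (k * t) *\<^sub>R P t + sin (k * t) *\<^sub>R Q t"
    unfolding P_def Q_def using \<open>k \<noteq> 0\<close> rot[of "k * t" "f t"] by (simp add: algebra_simps)
  then show "f t = cos (k * t) *\<^sub>R f 0 + (sin (k * t) / k) *\<^sub>R D 0"
    unfolding P Q by simp
  have "D t = k *\<^sub>R (cos (k * t) *\<^sub>R Q t - sin (k * t) *\<^sub>R P t)"
    unfolding P_def Q_def using \<open>k \<noteq> 0\<close> rot[of "k * t" "D t"] by (simp add: algebra_simps)
  then show "D t = (- k * sin (k * t)) *\<^sub>R f 0 + cos (k * t) *\<^sub>R D 0"
    unfolding P Q using \<open>k \<noteq> 0\<close> by (simp add: algebra_simps)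
qed

locale secular_root =
  fixes a kinv m lam :: real
  assumes a_pos: "a > 0" and kinv_nonneg: "kinv \<ge> 0" and m_nonneg: "m \<ge> 0"
    and secular: "(1 - (a * kinv)\<^sup>2 * (lam / a)) * sincE (lam / a) + 2 * (a * kinv) * cosE (lam / a) = 0"
begin

definition rho :: real where
  "rho = a * kinv"

definition k :: real where
  "k = sqrt (lam / a)"

text \<open>The profile phi of the eigenfunctions with vanishing vertex values: it satisfies the Robin
  condition phi 0 - rho * phi' 0 = 0 at the tail, and the secular equation is exactly the Robin
  condition phi 1 + rho * phi' 1 = 0 at the head.\<close>

definition phi :: "real \<Rightarrow> real" where
  "phi t = rho * k * cos (k * t) + sin (k * t)"

definition dphi :: "real \<Rightarrow> real" where
  "dphi t = k * (cos (k * t) - rho * k * sin (k * t))"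

definition sigma :: real where
  "sigma = cos k - rho * k * sin k"

definition phi_norm_sq :: real where
  "phi_norm_sq = integral {0..1} (\<lambda>t. (phi t)\<^sup>2)"

lemma lam_pos: "lam > 0"
  using secular_root_pos[OF a_pos kinv_nonneg secular] .

lemma k_pos: "k > 0"
  unfolding k_def using lam_pos a_pos by simp

lemma k_sq: "k\<^sup>2 = lam / a"
  unfolding k_def using lam_pos a_pos by simp

lemma secular_trig: "(1 - (rho * k)\<^sup>2) * sin k + 2 * (rho * k) * cos k = 0"
proof -
  have "lam / a > 0"
    using lam_pos a_pos by simp
  then have "cosE (lam / a) = cos k" and "sincE (lam / a) = sin k / k"
    using cosE_eq_cos_sqrt sincE_eq_sin_sqrt_div unfolding k_def by simp_all
  moreover have "(a * kinv)\<^sup>2 * (lam / a) = (rho * k)\<^sup>2"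
    unfolding rho_def power_mult_distrib k_sq ..
  ultimately have "(1 - (rho * k)\<^sup>2) * (sin k / k) + 2 * rho * cos k = 0"
    using secular unfolding rho_def by simp
  moreover have "k * ((1 - (rho * k)\<^sup>2) * (sin k / k) + 2 * rho * cos k) =
      (1 - (rho * k)\<^sup>2) * sin k + 2 * (rho * k) * cos k"
    using k_pos by (simp add: field_simps)
  ultimately show ?thesis
    by simp
qed

lemma sigma_sq: "sigma\<^sup>2 = 1"
proof -
  have "sigma\<^sup>2 = (cos k)\<^sup>2 - sin k * (2 * (rho * k) * cos k) + (rho * k)\<^sup>2 * (sin k)\<^sup>2"
    unfolding sigma_def by (simp add: power2_eq_square algebra_simps)
  also have "2 * (rho * k) * cos k = - ((1 - (rho * k)\<^sup>2) * sin k)"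
    using secular_trig by linarith
  also have "(cos k)\<^sup>2 - sin k * - ((1 - (rho * k)\<^sup>2) * sin k) + (rho * k)\<^sup>2 * (sin k)\<^sup>2 =
      (cos k)\<^sup>2 + (sin k)\<^sup>2"
    by (simp add: power2_eq_square algebra_simps)
  finally show ?thesis
    by simp
qed

lemma abs_sigma: "\<bar>sigma\<bar> = 1"
  using sigma_sq power2_eq_1_iff[of sigma] by auto

lemma phi_0: "phi 0 = rho * k"
  by (simp add: phi_def)

lemma dphi_0: "dphi 0 = k"
  by (simp add: dphi_def)

lemma dphi_1: "dphi 1 = k * sigma"
  by (simp add: dphi_def sigma_def)

lemma phi_robin_head: "phi 1 + rho * dphi 1 = 0"
proof -
  have "phi 1 + rho * dphi 1 = (1 - (rho * k)\<^sup>2) * sin k + 2 * (rho * k) * cos k"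
    unfolding phi_def dphi_def by (simp add: power2_eq_square algebra_simps)
  then show ?thesis
    using secular_trig by simp
qed

lemma has_real_derivative_phi: "(phi has_real_derivative dphi t) (at t within S)"
  unfolding phi_def dphi_def by (auto intro!: derivative_eq_intros simp: algebra_simps)

lemma has_real_derivative_dphi: "(dphi has_real_derivative (- k\<^sup>2 * phi t)) (at t within S)"
  unfolding phi_def dphi_def by (auto intro!: derivative_eq_intros simp: algebra_simps power2_eq_square)

lemma continuous_on_phi: "continuous_on S phi"
  unfolding phi_def by (intro continuous_intros)

lemma continuous_on_dphi: "continuous_on S dphi"
  unfolding dphi_def by (intro continuous_intros)

lemma phi_nonzero: "\<exists>t\<in>{0..1}. phi t \<noteq> 0"
proof (cases "rho = 0")
  case False
  then show ?thesis
    using phi_0 k_pos by force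
next
  case True
  define t where "t = min 1 (1 / k)"
  have t: "t \<in> {0..1}" "0 < k * t" "k * t \<le> 1"
    using k_pos unfolding t_def by (auto simp: min_def field_simps)
  then have "sin (k * t) > 0"
    using pi_gt3 by (intro sin_gt_zero) auto
  then show ?thesis
    using True t(1) unfolding phi_def by force
qed

lemma integrable_phi_sq: "(\<lambda>t. (phi t)\<^sup>2) integrable_on {0..1}"
  by (intro integrable_continuous_interval continuous_intros continuous_on_phi)

lemma phi_norm_sq_pos: "phi_norm_sq > 0"
proof -
  have cont: "continuous_on (cbox 0 1) (\<lambda>t. (phi t)\<^sup>2)"
    by (intro continuous_intros continuous_on_phi)
  have "((\<lambda>t. (phi t)\<^sup>2) has_integral phi_norm_sq) (cbox 0 1)"
    unfolding phi_norm_sq_def using integrable_phi_sq by (simp add: has_integral_integral)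
  moreover obtain t where "t \<in> {0..1}" and "phi t \<noteq> 0"
    using phi_nonzero by blast
  ultimately have "phi_norm_sq \<noteq> 0"
    using has_integral_0_cbox_imp_0[OF cont, of t] by auto
  moreover have "phi_norm_sq \<ge> 0"
    unfolding phi_norm_sq_def by (intro integral_nonneg integrable_phi_sq) simp
  ultimately show ?thesis
    by simp
qed

lemma edge_eigenfunction_deriv01:
  assumes H2: "H2_rep f g"
    and eq: "AE t in lebesgue. t \<in> {0..1} \<longrightarrow> - of_real a * g t = of_real lam * f t"
    and "u \<in> {0..1}"
  shows "deriv01 f u = deriv01 f 0 - k\<^sup>2 *\<^sub>R integral {0..u} f"
proof -
  obtain N where N: "{u \<in> space lebesgue. \<not> (u \<in> {0..1} \<longrightarrow> - of_real a * g u = of_real lam * f u)} \<subseteq> N"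
    "emeasure lebesgue N = 0" "N \<in> sets lebesgue"
    using eq by (rule AE_E)
  have "negligible N"
    using N(2,3) by (simp add: negligible_iff_null_sets null_sets_def)
  have g_eq: "g x = (- k\<^sup>2) *\<^sub>R f x" if "x \<in> {0..1}" "x \<notin> N" for x
  proof -
    have a: "(of_real a :: complex) \<noteq> 0"
      using a_pos by simp
    have eq_x: "- of_real a * g x = of_real lam * f x"
      using N(1) that by auto
    have "g x = (- of_real a * g x) * (- 1 / of_real a)"
      using a by (simp add: field_simps)
    also have "\<dots> = of_real lam * f x * (- 1 / of_real a)"
      unfolding eq_x ..
    also have "\<dots> = - of_real (lam / a) * f x"
      using a by (simp add: field_simps of_real_divide)
    finally show ?thesis
      by (simp add: k_sq scaleR_conv_of_real)
  qed
  have "integral {0..u} g = integral {0..u} (\<lambda>x. (- k\<^sup>2) *\<^sub>R f x)"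
    by (rule integral_spike[OF \<open>negligible N\<close>]) (use \<open>u \<in> {0..1}\<close> g_eq in auto)
  moreover have "deriv01 f u = deriv01 f 0 + integral {0..u} g"
    using H2 \<open>u \<in> {0..1}\<close> unfolding H2_rep_def by blast
  ultimately show ?thesis
    by simp
qed

lemma edge_eigenfunction_solution:
  assumes H2: "H2_rep f g"
    and eq: "AE t in lebesgue. t \<in> {0..1} \<longrightarrow> - of_real a * g t = of_real lam * f t"
    and "t \<in> {0..1}"
  shows "f t = cos (k * t) *\<^sub>R f 0 + (sin (k * t) / k) *\<^sub>R deriv01 f 0"
    and "deriv01 f t = (- k * sin (k * t)) *\<^sub>R f 0 + cos (k * t) *\<^sub>R deriv01 f 0"
proof -
  define D where "D u = deriv01 f 0 - k\<^sup>2 *\<^sub>R integral {0..u} f" for u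
  have D: "deriv01 f u = D u" if "u \<in> {0..1}" for u
    unfolding D_def by (rule edge_eigenfunction_deriv01[OF H2 eq that])
  have f': "(f has_vector_derivative D u) (at u within {0..1})" if "u \<in> {0..1}" for u
  proof -
    have "(f has_vector_derivative deriv01 f u) (at u within {0..1})"
      using H2 that unfolding H2_rep_def by blast
    then show ?thesis
      unfolding D[OF that] .
  qed
  then have "continuous_on {0..1} f"
    by (rule continuous_on_vector_derivative)
  then have D': "(D has_vector_derivative (- k\<^sup>2 *\<^sub>R f u)) (at u within {0..1})" if "u \<in> {0..1}" for u
    unfolding D_def using integral_has_vector_derivative[OF _ that]
    by (auto intro!: derivative_eq_intros)
  have "f t = cos (k * t) *\<^sub>R f 0 + (sin (k * t) / k) *\<^sub>R D 0"
    and "D t = (- k * sin (k * t)) *\<^sub>R f 0 + cos (k * t) *\<^sub>R D 0"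
    using harmonic_oscillator_solution[of k "{0..1}" t f D] k_pos f' D' \<open>t \<in> {0..1}\<close> by auto
  then show "f t = cos (k * t) *\<^sub>R f 0 + (sin (k * t) / k) *\<^sub>R deriv01 f 0"
    and "deriv01 f t = (- k * sin (k * t)) *\<^sub>R f 0 + cos (k * t) *\<^sub>R deriv01 f 0"
    using D[of 0] D[OF \<open>t \<in> {0..1}\<close>] by simp_all
qed

section \<open>Eigenvectors of the free operator\<close>

lemma robin_head_eq_sigma_robin_tail:
  fixes A B :: complex
  shows "(cos k *\<^sub>R A + (sin k / k) *\<^sub>R B) + of_real rho * ((- k * sin k) *\<^sub>R A + cos k *\<^sub>R B) =
    of_real sigma * (A + of_real rho * (- B))"
proof -
  have "k * (sin k / k + rho * cos k + sigma * rho) = (1 - (rho * k)\<^sup>2) * sin k + 2 * (rho * k) * cos k"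
    using k_pos unfolding sigma_def by (simp add: field_simps power2_eq_square)
  then have B: "sin k / k + rho * cos k = - sigma * rho"
    using secular_trig k_pos by simp
  have "(cos k *\<^sub>R A + (sin k / k) *\<^sub>R B) + of_real rho * ((- k * sin k) *\<^sub>R A + cos k *\<^sub>R B) =
      of_real (cos k - rho * k * sin k) * A + of_real (sin k / k + rho * cos k) * B"
    by (simp add: scaleR_conv_of_real algebra_simps)
  also have "\<dots> = of_real sigma * (A + of_real rho * (- B))"
    unfolding B sigma_def[symmetric] by (simp add: algebra_simps)
  finally show ?thesis .
qed

lemma A0_eig_edge_equation:
  assumes "y \<in> A0_eig a kinv m lam"
  shows "\<exists>g. (\<forall>e. H2_rep (fst y e) (g e)) \<and> (\<lambda>e. H2_normsq (fst y e) (g e)) summable_on UNIV \<and>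
    (\<forall>e. AE t in lebesgue. t \<in> {0..1} \<longrightarrow> - of_real a * g e t = of_real lam * fst y e t)"
  using assms unfolding A0_eig_def A0_dom_wit_def by blast

lemma A0_eig_robin:
  assumes "y \<in> A0_eig a kinv m lam" and "e \<in> incident v"
  shows "vval (fst y) e v + of_real rho * dnorm (fst y) e v = snd y v"
  using assms unfolding A0_eig_def A0_dom_wit_def rho_def by blast

lemma A0_eig_vertex_summable:
  assumes "y \<in> A0_eig a kinv m lam"
  shows "(\<lambda>v. (cmod (snd y v))\<^sup>2) summable_on UNIV"
  using assms unfolding A0_eig_def A0_dom_wit_def by blast

lemma A0_eig_vertex_equation:
  assumes "y \<in> A0_eig a kinv m lam"
  shows "if m = 0 then (\<Sum>e\<in>incident v. dnorm (fst y) e v) = 0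
    else of_real (a / m) * (\<Sum>e\<in>incident v. dnorm (fst y) e v) = of_real lam * snd y v"
proof (cases "m = 0")
  case True
  with assms have "(\<Sum>e\<in>incident v. dnorm (fst y) e v) = 0"
    unfolding A0_eig_def A0_dom_wit_def by blast
  with True show ?thesis
    by simp
next
  case False
  with m_nonneg have "m > 0"
    by simp
  with assms have "of_real (a / m) * (\<Sum>e\<in>incident v. dnorm (fst y) e v) = of_real lam * snd y v"
    unfolding A0_eig_def by blast
  with False show ?thesis
    by simp
qed

lemma A0_eig_edge_solution:
  assumes "y \<in> A0_eig a kinv m lam" and "t \<in> {0..1}"
  shows "fst y e t = cos (k * t) *\<^sub>R fst y e 0 + (sin (k * t) / k) *\<^sub>R deriv01 (fst y e) 0"
    and "deriv01 (fst y e) t = (- k * sin (k * t)) *\<^sub>R fst y e 0 + cos (k * t) *\<^sub>R deriv01 (fst y e) 0"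
proof -
  obtain g where "H2_rep (fst y e) (g e)"
    and "AE t in lebesgue. t \<in> {0..1} \<longrightarrow> - of_real a * g e t = of_real lam * fst y e t"
    using A0_eig_edge_equation[OF assms(1)] by blast
  from edge_eigenfunction_solution[OF this assms(2)]
  show "fst y e t = cos (k * t) *\<^sub>R fst y e 0 + (sin (k * t) / k) *\<^sub>R deriv01 (fst y e) 0"
    and "deriv01 (fst y e) t = (- k * sin (k * t)) *\<^sub>R fst y e 0 + cos (k * t) *\<^sub>R deriv01 (fst y e) 0" .
qed

lemma A0_eig_robin_tailv:
  assumes "y \<in> A0_eig a kinv m lam"
  shows "fst y e 0 + of_real rho * (- deriv01 (fst y e) 0) = snd y (tailv e)"
  using A0_eig_robin[OF assms edge_mem_incident_tailv] by (simp add: vval_tailv dnorm_tailv)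

lemma A0_eig_headv_value:
  assumes "y \<in> A0_eig a kinv m lam"
  shows "snd y (headv e) = of_real sigma * snd y (tailv e)"
proof -
  have "snd y (headv e) = fst y e 1 + of_real rho * deriv01 (fst y e) 1"
    using A0_eig_robin[OF assms edge_mem_incident_headv] by (simp add: vval_headv dnorm_headv)
  also have "\<dots> = (cos k *\<^sub>R fst y e 0 + (sin k / k) *\<^sub>R deriv01 (fst y e) 0) +
      of_real rho * ((- k * sin k) *\<^sub>R fst y e 0 + cos k *\<^sub>R deriv01 (fst y e) 0)"
    using A0_eig_edge_solution[OF assms, of 1 e] by simp
  also have "\<dots> = of_real sigma * snd y (tailv e)"
    unfolding robin_head_eq_sigma_robin_tail A0_eig_robin_tailv[OF assms] ..
  finally show ?thesis .
qed

lemma A0_eig_vertex_zero: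
  assumes "y \<in> A0_eig a kinv m lam"
  shows "snd y v = 0"
proof (rule vertex_values_vanish)
  show "cmod (snd y (headv e)) = cmod (snd y (tailv e))" for e
    unfolding A0_eig_headv_value[OF assms] norm_mult norm_of_real abs_sigma by simp
  show "(\<lambda>v. (cmod (snd y v))\<^sup>2) summable_on UNIV"
    by (rule A0_eig_vertex_summable[OF assms])
qed

definition amplitude :: "state \<Rightarrow> edge \<Rightarrow> complex" where
  "amplitude y e = deriv01 (fst y e) 0 / of_real k"

lemma A0_eig_edge_form:
  assumes "y \<in> A0_eig a kinv m lam" and "t \<in> {0..1}"
  shows "fst y e t = amplitude y e * of_real (phi t)"
    and "deriv01 (fst y e) t = amplitude y e * of_real (dphi t)"
proof -
  have B: "deriv01 (fst y e) 0 = of_real k * amplitude y e"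
    unfolding amplitude_def using k_pos by simp
  have A: "fst y e 0 = of_real rho * (of_real k * amplitude y e)"
    using A0_eig_robin_tailv[OF assms(1), of e] A0_eig_vertex_zero[OF assms(1)] B
    by (simp add: algebra_simps)
  show "fst y e t = amplitude y e * of_real (phi t)"
    using A0_eig_edge_solution(1)[OF assms, of e] k_pos unfolding A B phi_def
    by (simp add: scaleR_conv_of_real algebra_simps)
  show "deriv01 (fst y e) t = amplitude y e * of_real (dphi t)"
    using A0_eig_edge_solution(2)[OF assms, of e] unfolding A B dphi_def
    by (simp add: scaleR_conv_of_real algebra_simps)
qed

lemma A0_eig_kirchhoff:
  assumes "y \<in> A0_eig a kinv m lam"
  shows "(\<Sum>e\<in>incident v. dnorm (fst y) e v) = 0"
  using A0_eig_vertex_equation[OF assms, of v] A0_eig_vertex_zero[OF assms, of v] a_pos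
  by (auto split: if_splits)

lemma sum_dnorm_eq_0_iff:
  assumes "\<And>e. deriv01 (u e) 0 = \<beta> e * of_real k" and "\<And>e. deriv01 (u e) 1 = \<beta> e * of_real (k * sigma)"
  shows "(\<Sum>e\<in>incident v. dnorm u e v) = 0 \<longleftrightarrow> (\<Sum>e\<in>incident v. \<beta> e) = 0"
proof (cases v rule: prod_cases3)
  case (fields i j b)
  have "k \<noteq> 0" and "sigma \<noteq> 0"
    using k_pos abs_sigma by auto
  show ?thesis
  proof (cases b)
    case False
    then have "(\<Sum>e\<in>incident v. dnorm u e v) = - of_real k * (\<Sum>e\<in>incident v. \<beta> e)"
      using fields assms(1) tailv_eq_A_vertex by (simp add: sum_distrib_left dnorm_def mult.commute)
    then show ?thesis
      using \<open>k \<noteq> 0\<close> by simp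
  next
    case True
    then have "(\<Sum>e\<in>incident v. dnorm u e v) = of_real (k * sigma) * (\<Sum>e\<in>incident v. \<beta> e)"
      using fields assms(2) not_sym[OF tailv_ne_B_vertex]
      by (simp add: sum_distrib_right dnorm_def mult.commute)
    then show ?thesis
      using \<open>k \<noteq> 0\<close> \<open>sigma \<noteq> 0\<close> by simp
  qed
qed

lemma divergence_free_amplitude:
  assumes "y \<in> A0_eig a kinv m lam"
  shows "divergence_free (amplitude y)"
  unfolding divergence_free_def
proof
  fix v
  show "(\<Sum>e\<in>incident v. amplitude y e) = 0"
    using sum_dnorm_eq_0_iff[of "fst y" "amplitude y" v] A0_eig_kirchhoff[OF assms, of v]
      A0_eig_edge_form(2)[OF assms] by (simp add: dphi_0 dphi_1)
qed

lemma summable_amplitude_sq: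
  assumes "y \<in> A0_eig a kinv m lam"
  shows "(\<lambda>e. (cmod (amplitude y e))\<^sup>2) summable_on UNIV"
proof -
  obtain g where H2: "\<And>e. H2_rep (fst y e) (g e)"
    and sm: "(\<lambda>e. H2_normsq (fst y e) (g e)) summable_on UNIV"
    using A0_eig_edge_equation[OF assms] by blast
  have "(cmod (amplitude y e))\<^sup>2 * phi_norm_sq \<le> H2_normsq (fst y e) (g e)" for e
  proof -
    define c where "c = (cmod (amplitude y e))\<^sup>2"
    have "(\<lambda>t. (cmod (g e t))\<^sup>2) integrable_on {0..1}"
      using H2[of e] unfolding H2_rep_def sq_int_def by blast
    moreover have "(\<lambda>t. (dphi t)\<^sup>2) integrable_on {0..1}"
      by (intro integrable_continuous_interval continuous_intros continuous_on_dphi)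
    ultimately have int: "(\<lambda>t. c * (phi t)\<^sup>2 + c * (dphi t)\<^sup>2 + (cmod (g e t))\<^sup>2) integrable_on {0..1}"
      by (intro integrable_add integrable_on_mult_right integrable_phi_sq)
    have "c * phi_norm_sq = integral {0..1} (\<lambda>t. c * (phi t)\<^sup>2)"
      unfolding phi_norm_sq_def by (simp add: integrable_phi_sq)
    also have "\<dots> \<le> integral {0..1} (\<lambda>t. c * (phi t)\<^sup>2 + c * (dphi t)\<^sup>2 + (cmod (g e t))\<^sup>2)"
      by (rule integral_le[OF integrable_on_mult_right[OF integrable_phi_sq] int]) (simp add: c_def)
    also have "\<dots> = H2_normsq (fst y e) (g e)"
      unfolding H2_normsq_def using A0_eig_edge_form[OF assms]
      by (intro Henstock_Kurzweil_Integration.integral_cong) (simp add: c_def norm_mult power_mult_distrib)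
    finally show ?thesis
      unfolding c_def .
  qed
  then show ?thesis
    using phi_norm_sq_pos
    by (intro summable_on_comparison_test[OF summable_on_cmult_left[OF sm, of "1 / phi_norm_sq"]])
       (auto simp: field_simps)
qed

section \<open>Flow states\<close>

definition flow_state :: "(edge \<Rightarrow> complex) \<Rightarrow> state" where
  "flow_state \<beta> = ((\<lambda>e t. \<beta> e * of_real (phi t)), (\<lambda>v. 0))"

lemma has_vector_derivative_scaled_phi:
  "((\<lambda>t. c * complex_of_real (phi t)) has_vector_derivative (c * of_real (dphi t))) (at t within S)"
  by (intro has_vector_derivative_mult_right has_vector_derivative_of_real has_real_derivative_phi)

lemma has_vector_derivative_scaled_dphi:
  "((\<lambda>t. c * complex_of_real (dphi t)) has_vector_derivative (c * of_real (- k\<^sup>2 * phi t))) (at t within S)"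
  by (intro has_vector_derivative_mult_right has_vector_derivative_of_real has_real_derivative_dphi)

lemma deriv01_scaled_phi:
  "t \<in> {0..1} \<Longrightarrow> deriv01 (\<lambda>t. c * complex_of_real (phi t)) t = c * of_real (dphi t)"
  unfolding deriv01_def
  by (rule vector_derivative_within_closed_interval) (auto intro: has_vector_derivative_scaled_phi)

lemma H2_rep_scaled_phi: "H2_rep (\<lambda>t. c * complex_of_real (phi t)) (\<lambda>t. c * of_real (- k\<^sup>2 * phi t))"
  unfolding H2_rep_def
proof (intro conjI ballI)
  fix t :: real
  assume t: "t \<in> {0..1}"
  show "((\<lambda>t. c * of_real (phi t)) has_vector_derivative deriv01 (\<lambda>t. c * of_real (phi t)) t) (at t within {0..1})"
    unfolding deriv01_scaled_phi[OF t] by (rule has_vector_derivative_scaled_phi)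
  have "((\<lambda>t. c * of_real (- k\<^sup>2 * phi t)) has_integral (c * of_real (dphi t) - c * of_real (dphi 0))) {0..t}"
  proof (rule fundamental_theorem_of_calculus)
    show "0 \<le> t"
      using t by simp
    show "((\<lambda>t. c * complex_of_real (dphi t)) has_vector_derivative c * of_real (- k\<^sup>2 * phi x))
        (at x within {0..t})" for x
      by (rule has_vector_derivative_scaled_dphi)
  qed
  then have "integral {0..t} (\<lambda>t. c * of_real (- k\<^sup>2 * phi t)) = c * of_real (dphi t) - c * of_real (dphi 0)"
    by (rule integral_unique)
  then show "deriv01 (\<lambda>t. c * of_real (phi t)) t =
      deriv01 (\<lambda>t. c * of_real (phi t)) 0 + integral {0..t} (\<lambda>t. c * of_real (- k\<^sup>2 * phi t))"
    using deriv01_scaled_phi[OF t] deriv01_scaled_phi[of 0] by simp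
next
  have "continuous_on {0..1} (\<lambda>t. c * of_real (- k\<^sup>2 * phi t))"
    by (intro continuous_intros continuous_on_phi)
  then show "sq_int (\<lambda>t. c * of_real (- k\<^sup>2 * phi t))"
    unfolding sq_int_def
    by (auto intro!: absolutely_integrable_continuous_real integrable_continuous_interval
        continuous_intros continuous_on_phi)
qed

lemma H2_normsq_scaled_phi:
  "H2_normsq (\<lambda>t. c * complex_of_real (phi t)) (\<lambda>t. c * of_real (- k\<^sup>2 * phi t)) =
    (cmod c)\<^sup>2 * integral {0..1} (\<lambda>t. (phi t)\<^sup>2 + (dphi t)\<^sup>2 + (k\<^sup>2 * phi t)\<^sup>2)"
proof -
  have "H2_normsq (\<lambda>t. c * of_real (phi t)) (\<lambda>t. c * of_real (- k\<^sup>2 * phi t)) =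
      integral {0..1} (\<lambda>t. (cmod c)\<^sup>2 * ((phi t)\<^sup>2 + (dphi t)\<^sup>2 + (k\<^sup>2 * phi t)\<^sup>2))"
    unfolding H2_normsq_def
    by (rule Henstock_Kurzweil_Integration.integral_cong)
       (simp add: deriv01_scaled_phi norm_mult power_mult_distrib algebra_simps
         del: of_real_mult of_real_minus of_real_power)
  also have "\<dots> = (cmod c)\<^sup>2 * integral {0..1} (\<lambda>t. (phi t)\<^sup>2 + (dphi t)\<^sup>2 + (k\<^sup>2 * phi t)\<^sup>2)"
    by (rule integral_mult[symmetric])
       (intro integrable_continuous_interval continuous_intros continuous_on_phi continuous_on_dphi)
  finally show ?thesis .
qed

lemma flow_state_in_A0_eig:
  assumes "divergence_free \<beta>" and "(\<lambda>e. (cmod (\<beta> e))\<^sup>2) summable_on UNIV"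
  shows "flow_state \<beta> \<in> A0_eig a kinv m lam"
proof -
  define g where "g e t = \<beta> e * of_real (- k\<^sup>2 * phi t)" for e t
  have fst_flow: "fst (flow_state \<beta>) e = (\<lambda>t. \<beta> e * of_real (phi t))" for e
    by (simp add: flow_state_def)
  have kirchhoff: "(\<Sum>e\<in>incident v. dnorm (fst (flow_state \<beta>)) e v) = 0" for v
  proof -
    have "(\<Sum>e\<in>incident v. \<beta> e) = 0"
      using assms(1) unfolding divergence_free_def by blast
    then show ?thesis
      using sum_dnorm_eq_0_iff[of "fst (flow_state \<beta>)" \<beta> v]
      unfolding fst_flow by (simp add: deriv01_scaled_phi dphi_0 dphi_1)
  qed
  have robin: "vval (fst (flow_state \<beta>)) e v + of_real (a * kinv) * dnorm (fst (flow_state \<beta>)) e v = 0"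
    if "e \<in> incident v" for v e
  proof (cases "v = tailv e")
    case True
    then show ?thesis
      using deriv01_scaled_phi[of 0 "\<beta> e"]
      by (simp add: vval_def dnorm_def fst_flow phi_0 dphi_0 rho_def algebra_simps)
  next
    case False
    then have "vval (fst (flow_state \<beta>)) e v + of_real (a * kinv) * dnorm (fst (flow_state \<beta>)) e v =
        \<beta> e * of_real (phi 1 + rho * dphi 1)"
      using deriv01_scaled_phi[of 1 "\<beta> e"]
      by (simp add: vval_def dnorm_def fst_flow rho_def algebra_simps)
    then show ?thesis
      unfolding phi_robin_head by simp
  qed
  have "A0_dom_wit a kinv m (flow_state \<beta>) g"
    unfolding A0_dom_wit_def fst_flow g_def H2_normsq_scaled_phi
    using H2_rep_scaled_phi summable_on_cmult_left[OF assms(2)] robin kirchhoff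
    by (simp add: flow_state_def)
  moreover have "- of_real a * g e t = of_real lam * fst (flow_state \<beta>) e t" for e t
    unfolding g_def fst_flow using a_pos by (simp add: k_sq field_simps)
  ultimately show ?thesis
    unfolding A0_eig_def using kirchhoff by (auto simp: flow_state_def)
qed

lemma amplitude_flow_state: "amplitude (flow_state \<beta>) = \<beta>"
  using k_pos by (simp add: amplitude_def flow_state_def deriv01_scaled_phi dphi_0 fun_eq_iff)

lemma A0_eig_eq_flow_state_amplitude:
  assumes "y \<in> A0_eig a kinv m lam"
  shows "t \<in> {0..1} \<Longrightarrow> fst y e t = fst (flow_state (amplitude y)) e t"
    and "snd y = snd (flow_state (amplitude y))"
  using A0_eig_edge_form(1)[OF assms] A0_eig_vertex_zero[OF assms]
  by (simp_all add: flow_state_def fun_eq_iff)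

lemma hnormsq_sdiff_flow_states:
  assumes "(\<lambda>e. (cmod (\<beta> e))\<^sup>2) summable_on UNIV" and "(\<lambda>e. (cmod (\<gamma> e))\<^sup>2) summable_on UNIV"
  shows "hnormsq m (sdiff (flow_state \<beta>) (flow_state \<gamma>)) = phi_norm_sq * (\<Sum>\<^sub>\<infinity>e. (cmod (\<beta> e - \<gamma> e))\<^sup>2)"
proof -
  have "integral {0..1} (\<lambda>t. (cmod (fst (sdiff (flow_state \<beta>) (flow_state \<gamma>)) e t))\<^sup>2) =
      (cmod (\<beta> e - \<gamma> e))\<^sup>2 * phi_norm_sq" for e
  proof -
    have "integral {0..1} (\<lambda>t. (cmod (fst (sdiff (flow_state \<beta>) (flow_state \<gamma>)) e t))\<^sup>2) =
        integral {0..1} (\<lambda>t. (cmod (\<beta> e - \<gamma> e))\<^sup>2 * (phi t)\<^sup>2)"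
      by (simp add: fst_sdiff flow_state_def left_diff_distrib[symmetric] norm_mult power_mult_distrib)
    then show ?thesis
      unfolding phi_norm_sq_def by (simp add: integrable_phi_sq)
  qed
  then show ?thesis
    unfolding hnormsq_def by (simp add: snd_sdiff flow_state_def infsum_cmult_right' mult.commute)
qed

section \<open>Distance of a state to the flow states\<close>

definition phi_coeff :: "(real \<Rightarrow> complex) \<Rightarrow> complex" where
  "phi_coeff u = integral {0..1} (\<lambda>t. u t * of_real (phi t)) / of_real phi_norm_sq"

definition phi_residual :: "(real \<Rightarrow> complex) \<Rightarrow> real" where
  "phi_residual u = integral {0..1} (\<lambda>t. (cmod (u t - phi_coeff u * of_real (phi t)))\<^sup>2)"

lemma integrable_mult_phi:
  assumes "sq_int u"
  shows "(\<lambda>t. u t * of_real (phi t)) integrable_on {0..1}"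
proof -
  have "(\<lambda>t. complex_of_real (phi t)) \<in> borel_measurable (lebesgue_on {0..1})"
    by (rule continuous_imp_measurable_on_sets_lebesgue) (auto intro!: continuous_intros continuous_on_phi)
  moreover have "bounded ((\<lambda>t. complex_of_real (phi t)) ` {0..1})"
    by (intro compact_imp_bounded compact_continuous_image) (auto intro!: continuous_intros continuous_on_phi)
  moreover have "u absolutely_integrable_on {0..1}"
    using assms unfolding sq_int_def by blast
  ultimately have "(\<lambda>t. complex_of_real (phi t) * u t) absolutely_integrable_on {0..1}"
    by (intro absolutely_integrable_bounded_measurable_product[OF bilinear_times]) auto
  then show ?thesis
    using set_lebesgue_integral_eq_integral(1) by (fastforce simp: mult.commute)
qed

lemma has_integral_cmod_sq_diff_phi:
  assumes "sq_int u"
  shows "((\<lambda>t. (cmod (u t - g * of_real (phi t)))\<^sup>2) has_integral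
      (integral {0..1} (\<lambda>t. (cmod (u t))\<^sup>2) - 2 * Re (cnj g * integral {0..1} (\<lambda>t. u t * of_real (phi t)))
        + (cmod g)\<^sup>2 * phi_norm_sq)) {0..1}"
proof -
  have expand: "(cmod (z - g * complex_of_real r))\<^sup>2 = (cmod z)\<^sup>2 - 2 * Re (cnj g * (z * of_real r)) + (cmod g)\<^sup>2 * r\<^sup>2"
    for z r
    unfolding cmod_power2 by (simp add: power2_eq_square algebra_simps)
  have i1: "((\<lambda>t. (cmod (u t))\<^sup>2) has_integral integral {0..1} (\<lambda>t. (cmod (u t))\<^sup>2)) {0..1}"
    using assms unfolding sq_int_def by (simp add: has_integral_integral)
  have i2: "((\<lambda>t. Re (cnj g * (u t * of_real (phi t)))) has_integral
      Re (cnj g * integral {0..1} (\<lambda>t. u t * of_real (phi t)))) {0..1}"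
    using has_integral_linear[OF has_integral_mult_right[OF integrable_integral[OF integrable_mult_phi[OF assms]],
          of "cnj g"] bounded_linear_Re]
    by (simp add: o_def)
  have i3: "((\<lambda>t. (cmod g)\<^sup>2 * (phi t)\<^sup>2) has_integral (cmod g)\<^sup>2 * phi_norm_sq) {0..1}"
    unfolding phi_norm_sq_def using has_integral_mult_right[OF integrable_integral[OF integrable_phi_sq]] by simp
  show ?thesis
    unfolding expand by (intro has_integral_add has_integral_diff i1 i3 has_integral_mult_right i2)
qed

text \<open>Pythagoras: the residual is orthogonal to phi.\<close>

lemma integral_cmod_sq_diff_phi:
  assumes "sq_int u"
  shows "(\<lambda>t. (cmod (u t - g * of_real (phi t)))\<^sup>2) integrable_on {0..1}"
    and "integral {0..1} (\<lambda>t. (cmod (u t - g * of_real (phi t)))\<^sup>2) =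
      phi_residual u + (cmod (phi_coeff u - g))\<^sup>2 * phi_norm_sq"
proof -
  show "(\<lambda>t. (cmod (u t - g * of_real (phi t)))\<^sup>2) integrable_on {0..1}"
    using has_integral_cmod_sq_diff_phi[OF assms] by blast
  define I where "I = integral {0..1} (\<lambda>t. u t * of_real (phi t))"
  have I: "I = phi_coeff u * of_real phi_norm_sq"
    unfolding phi_coeff_def I_def using phi_norm_sq_pos by simp
  have "integral {0..1} (\<lambda>t. (cmod (u t - g * of_real (phi t)))\<^sup>2) -
      integral {0..1} (\<lambda>t. (cmod (u t - phi_coeff u * of_real (phi t)))\<^sup>2) =
      (2 * Re (cnj (phi_coeff u) * I) - 2 * Re (cnj g * I)) + ((cmod g)\<^sup>2 - (cmod (phi_coeff u))\<^sup>2) * phi_norm_sq"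
    using integral_unique[OF has_integral_cmod_sq_diff_phi[OF assms, of g]]
      integral_unique[OF has_integral_cmod_sq_diff_phi[OF assms, of "phi_coeff u"]]
    unfolding I_def by (simp add: algebra_simps)
  also have "\<dots> = (cmod (phi_coeff u - g))\<^sup>2 * phi_norm_sq"
    unfolding I cmod_power2 by (simp add: power2_eq_square algebra_simps)
  finally show "integral {0..1} (\<lambda>t. (cmod (u t - g * of_real (phi t)))\<^sup>2) =
      phi_residual u + (cmod (phi_coeff u - g))\<^sup>2 * phi_norm_sq"
    unfolding phi_residual_def by simp
qed

lemma phi_residual_nonneg: "sq_int u \<Longrightarrow> phi_residual u \<ge> 0"
  unfolding phi_residual_def using integral_cmod_sq_diff_phi(1) by (intro integral_nonneg) auto

lemma phi_residual_le:
  assumes "sq_int u"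
  shows "phi_residual u \<le> integral {0..1} (\<lambda>t. (cmod (u t))\<^sup>2)"
    and "(cmod (phi_coeff u))\<^sup>2 * phi_norm_sq \<le> integral {0..1} (\<lambda>t. (cmod (u t))\<^sup>2)"
proof -
  have "integral {0..1} (\<lambda>t. (cmod (u t))\<^sup>2) = phi_residual u + (cmod (phi_coeff u))\<^sup>2 * phi_norm_sq"
    using integral_cmod_sq_diff_phi(2)[OF assms, of 0] by simp
  moreover have "0 \<le> (cmod (phi_coeff u))\<^sup>2 * phi_norm_sq"
    using phi_norm_sq_pos by simp
  ultimately show "phi_residual u \<le> integral {0..1} (\<lambda>t. (cmod (u t))\<^sup>2)"
    and "(cmod (phi_coeff u))\<^sup>2 * phi_norm_sq \<le> integral {0..1} (\<lambda>t. (cmod (u t))\<^sup>2)"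
    using phi_residual_nonneg[OF assms] by linarith+
qed

lemma in_H_summable_phi_residual:
  assumes "in_H x"
  shows "(\<lambda>e. phi_residual (fst x e)) summable_on UNIV"
proof (rule summable_on_comparison_test)
  show "(\<lambda>e. integral {0..1} (\<lambda>t. (cmod (fst x e t))\<^sup>2)) summable_on UNIV"
    by (rule in_HD(2)[OF assms])
  show "phi_residual (fst x e) \<le> integral {0..1} (\<lambda>t. (cmod (fst x e t))\<^sup>2)"
    and "0 \<le> phi_residual (fst x e)" for e
    using phi_residual_le(1) phi_residual_nonneg in_HD(1)[OF assms] by blast+
qed

lemma in_H_summable_phi_coeff_sq:
  assumes "in_H x"
  shows "(\<lambda>e. (cmod (phi_coeff (fst x e)))\<^sup>2) summable_on UNIV"
proof (rule summable_on_comparison_test)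
  show "(\<lambda>e. integral {0..1} (\<lambda>t. (cmod (fst x e t))\<^sup>2) * (1 / phi_norm_sq)) summable_on UNIV"
    by (intro summable_on_cmult_left in_HD(2)[OF assms])
  show "(cmod (phi_coeff (fst x e)))\<^sup>2 \<le> integral {0..1} (\<lambda>t. (cmod (fst x e t))\<^sup>2) * (1 / phi_norm_sq)" for e
    using phi_residual_le(2)[OF in_HD(1)[OF assms]] phi_norm_sq_pos by (simp add: field_simps)
qed simp

lemma hnormsq_sdiff_flow_state:
  assumes "in_H x" and "(\<lambda>e. (cmod (\<gamma> e))\<^sup>2) summable_on UNIV"
  defines "R \<equiv> \<Sum>\<^sub>\<infinity>e. phi_residual (fst x e)" and "V \<equiv> \<Sum>\<^sub>\<infinity>v. (cmod (snd x v))\<^sup>2"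
    and "D \<equiv> \<Sum>\<^sub>\<infinity>e. (cmod (phi_coeff (fst x e) - \<gamma> e))\<^sup>2"
  shows "hnormsq m (sdiff x (flow_state \<gamma>)) = R + phi_norm_sq * D + m * V"
    and "R \<ge> 0" and "V \<ge> 0" and "D \<ge> 0"
proof -
  have "integral {0..1} (\<lambda>t. (cmod (fst (sdiff x (flow_state \<gamma>)) e t))\<^sup>2) =
      phi_residual (fst x e) + phi_norm_sq * (cmod (phi_coeff (fst x e) - \<gamma> e))\<^sup>2" for e
    using integral_cmod_sq_diff_phi(2)[OF in_HD(1)[OF assms(1)], of e "\<gamma> e"]
    by (simp add: fst_sdiff flow_state_def mult.commute)
  moreover have "(\<lambda>e. (cmod (phi_coeff (fst x e) - \<gamma> e))\<^sup>2) summable_on UNIV"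
    by (intro summable_on_norm_diff_sq in_H_summable_phi_coeff_sq assms)
  ultimately show "hnormsq m (sdiff x (flow_state \<gamma>)) = R + phi_norm_sq * D + m * V"
    unfolding hnormsq_def R_def V_def D_def using in_H_summable_phi_residual[OF assms(1)]
    by (simp add: snd_sdiff flow_state_def infsum_add summable_on_cmult_right infsum_cmult_right')
  show "R \<ge> 0"
    unfolding R_def using phi_residual_nonneg[OF in_HD(1)[OF assms(1)]] by (intro infsum_nonneg) auto
  show "V \<ge> 0" and "D \<ge> 0"
    unfolding V_def D_def by (intro infsum_nonneg; simp)+
qed

section \<open>Loop states and the closed span\<close>

definition loop_state :: "int \<times> int \<Rightarrow> state" where
  "loop_state h = flow_state (curl (face_delta h))"

lemma loop_state_mem_loop_states: "loop_state h \<in> loop_states a kinv m lam"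
proof -
  have "loop_state h \<in> A0_eig a kinv m lam"
    unfolding loop_state_def
    by (intro flow_state_in_A0_eig divergence_free_curl finite_nonzero_values_imp_summable_on)
       (use finite_curl_face_delta_support[of h] in \<open>auto elim: finite_subset[rotated]\<close>)
  moreover have "\<forall>e. e \<notin> hexagon h \<longrightarrow> (\<forall>t\<in>{0..1}. fst (loop_state h) e t = 0)"
    using curl_face_delta_eq_0 by (simp add: loop_state_def flow_state_def)
  moreover have "\<forall>v. snd (loop_state h) v = 0"
    by (simp add: loop_state_def flow_state_def)
  ultimately show ?thesis
    unfolding loop_states_def by blast
qed

lemma inj_loop_state: "inj loop_state"
proof (rule injI)
  fix h h' :: "int \<times> int"
  assume "loop_state h = loop_state h'"
  then have "curl (face_delta h) = curl (face_delta h')"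
    using amplitude_flow_state unfolding loop_state_def by metis
  then have "curl (face_delta h') (fst h, snd h, D0) = 1"
    using curl_face_delta_D0[of h "fst h" "snd h"] by (metis prod.collapse)
  then show "h = h'"
    by (simp add: curl_face_delta_D0 split: if_splits)
qed

lemma lincomb_loop_states:
  assumes "finite H" and "\<And>h. h \<notin> H \<Longrightarrow> \<psi> h = 0"
  shows "lincomb (loop_state ` H) (\<lambda>f. \<psi> (inv_into H loop_state f)) = flow_state (curl \<psi>)"
proof -
  have inj: "inj_on loop_state H"
    using inj_loop_state by (auto simp: inj_on_def inj_def)
  have "(\<Sum>f\<in>loop_state ` H. \<psi> (inv_into H loop_state f) * fst f e t) =
      (\<Sum>h\<in>H. \<psi> (inv_into H loop_state (loop_state h)) * fst (loop_state h) e t)" for e t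
    by (simp add: sum.reindex[OF inj])
  also have "\<dots> e t = (\<Sum>h\<in>H. \<psi> h * curl (face_delta h) e * of_real (phi t))" for e t
    using inv_into_f_f[OF inj] by (simp add: loop_state_def flow_state_def mult.assoc)
  also have "\<dots> e t = curl \<psi> e * of_real (phi t)" for e t
    by (simp add: curl_eq_sum_face_delta[OF assms, where e = e] sum_distrib_right)
  finally have "(\<Sum>f\<in>loop_state ` H. \<psi> (inv_into H loop_state f) * fst f e t) = curl \<psi> e * of_real (phi t)"
    for e t .
  moreover have "(\<Sum>f\<in>loop_state ` H. \<psi> (inv_into H loop_state f) * snd f v) = 0" for v
    by (rule sum.neutral) (auto simp: loop_state_def flow_state_def)
  ultimately show ?thesis
    unfolding lincomb_def by (simp add: flow_state_def fun_eq_iff)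
qed

lemma lincomb_A0_eig_eq_flow_state:
  assumes "finite B" and "B \<subseteq> A0_eig a kinv m lam"
  shows "t \<in> {0..1} \<Longrightarrow> fst (lincomb B c) e t = fst (flow_state (\<lambda>e. \<Sum>b\<in>B. c b * amplitude b e)) e t"
    and "snd (lincomb B c) = snd (flow_state (\<lambda>e. \<Sum>b\<in>B. c b * amplitude b e))"
proof -
  have "(\<Sum>b\<in>B. c b * fst b e t) = (\<Sum>b\<in>B. c b * amplitude b e) * of_real (phi t)"
    if "t \<in> {0..1}"
    unfolding sum_distrib_right using A0_eig_edge_form(1)[OF subsetD[OF assms(2)] that]
    by (intro sum.cong) (simp_all add: mult.assoc)
  then show "t \<in> {0..1} \<Longrightarrow> fst (lincomb B c) e t = fst (flow_state (\<lambda>e. \<Sum>b\<in>B. c b * amplitude b e)) e t"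
    by (simp add: lincomb_def flow_state_def)
  show "snd (lincomb B c) = snd (flow_state (\<lambda>e. \<Sum>b\<in>B. c b * amplitude b e))"
    using A0_eig_vertex_zero subsetD[OF assms(2)] by (simp add: lincomb_def flow_state_def fun_eq_iff)
qed

lemma sum_amplitudes_divergence_free_l2:
  assumes "finite B" and "B \<subseteq> A0_eig a kinv m lam"
  shows "divergence_free (\<lambda>e. \<Sum>b\<in>B. c b * amplitude b e)"
    and "(\<lambda>e. (cmod (\<Sum>b\<in>B. c b * amplitude b e))\<^sup>2) summable_on UNIV"
proof -
  show "divergence_free (\<lambda>e. \<Sum>b\<in>B. c b * amplitude b e)"
    using assms(2) divergence_free_amplitude by (intro divergence_free_sum) blast
  have "(\<lambda>e. (cmod (c b * amplitude b e))\<^sup>2) summable_on UNIV" if "b \<in> B" for b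
    using summable_amplitude_sq[OF subsetD[OF assms(2) that]]
    by (simp add: norm_mult power_mult_distrib summable_on_cmult_right)
  then show "(\<lambda>e. (cmod (\<Sum>b\<in>B. c b * amplitude b e))\<^sup>2) summable_on UNIV"
    by (rule summable_on_norm_sum_sq[OF assms(1)])
qed

lemma hnormsq_sdiff_lincomb_A0_eig:
  assumes "finite B" and "B \<subseteq> A0_eig a kinv m lam"
  shows "hnormsq m (sdiff x (lincomb B c)) = hnormsq m (sdiff x (flow_state (\<lambda>e. \<Sum>b\<in>B. c b * amplitude b e)))"
  using lincomb_A0_eig_eq_flow_state[OF assms] by (intro hnormsq_sdiff_cong)

lemma hnormsq_sdiff_flow_state_if_null:
  assumes x: "in_H x" and y: "y \<in> A0_eig a kinv m lam" and null: "hnormsq m (sdiff x y) = 0"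
    and \<gamma>_l2: "(\<lambda>e. (cmod (\<gamma> e))\<^sup>2) summable_on UNIV"
  shows "hnormsq m (sdiff x (flow_state \<gamma>)) = phi_norm_sq * (\<Sum>\<^sub>\<infinity>e. (cmod (amplitude y e - \<gamma> e))\<^sup>2)"
proof -
  define R V D where "R = (\<Sum>\<^sub>\<infinity>e. phi_residual (fst x e))" and "V = (\<Sum>\<^sub>\<infinity>v. (cmod (snd x v))\<^sup>2)"
    and "D = (\<Sum>\<^sub>\<infinity>e. (cmod (phi_coeff (fst x e) - amplitude y e))\<^sup>2)"
  have y_l2: "(\<lambda>e. (cmod (amplitude y e))\<^sup>2) summable_on UNIV"
    by (rule summable_amplitude_sq[OF y])
  note split = hnormsq_sdiff_flow_state[OF x y_l2]
  have "R + phi_norm_sq * D + m * V = 0"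
    using null hnormsq_sdiff_cong[OF A0_eig_eq_flow_state_amplitude[OF y]] split(1)
    unfolding R_def V_def D_def by simp
  moreover have "m * V \<ge> 0" and "phi_norm_sq * D \<ge> 0" and "R \<ge> 0"
    using split(2-4) m_nonneg phi_norm_sq_pos unfolding R_def V_def D_def by simp_all
  ultimately have "D = 0" and "R + m * V = 0"
    using phi_norm_sq_pos by (smt (verit) mult_eq_0_iff)+
  moreover have "(\<lambda>e. (cmod (phi_coeff (fst x e) - amplitude y e))\<^sup>2) summable_on UNIV"
    by (intro summable_on_norm_diff_sq in_H_summable_phi_coeff_sq x y_l2)
  ultimately have "phi_coeff (fst x e) = amplitude y e" for e
    using summable_on_norm_sq_eq_0D[of "\<lambda>e. phi_coeff (fst x e) - amplitude y e" UNIV e]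
    unfolding D_def by simp
  then show ?thesis
    using hnormsq_sdiff_flow_state(1)[OF x \<gamma>_l2] \<open>R + m * V = 0\<close> unfolding R_def V_def by simp
qed

lemma A0_eig_mem_closed_span_loop_states:
  assumes x: "in_H x" and y: "y \<in> A0_eig a kinv m lam" and null: "hnormsq m (sdiff x y) = 0"
  shows "in_cspan m (loop_states a kinv m lam) x"
  unfolding in_cspan_def
proof (intro allI impI)
  fix \<epsilon> :: real
  assume "\<epsilon> > 0"
  define \<beta> where "\<beta> = amplitude y"
  have "divergence_free \<beta>" and \<beta>_l2: "(\<lambda>e. (cmod (\<beta> e))\<^sup>2) summable_on UNIV"
    unfolding \<beta>_def using divergence_free_amplitude[OF y] summable_amplitude_sq[OF y] .
  then obtain \<psi> where fin: "finite {p. \<psi> p \<noteq> 0}"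
    and sm: "(\<lambda>e. (cmod (\<beta> e - curl \<psi> e))\<^sup>2) summable_on UNIV"
    and small: "(\<Sum>\<^sub>\<infinity>e. (cmod (\<beta> e - curl \<psi> e))\<^sup>2) < \<epsilon> / phi_norm_sq"
    using divergence_free_l2_approx_by_curls[of \<beta> "\<epsilon> / phi_norm_sq"] \<open>\<epsilon> > 0\<close> phi_norm_sq_pos by auto
  define F where "F = loop_state ` {p. \<psi> p \<noteq> 0}"
  define c where "c f = \<psi> (inv_into {p. \<psi> p \<noteq> 0} loop_state f)" for f
  have "lincomb F c = flow_state (curl \<psi>)"
    unfolding F_def c_def by (rule lincomb_loop_states[OF fin]) simp
  moreover have "(\<lambda>e. (cmod (curl \<psi> e))\<^sup>2) summable_on UNIV"
    using summable_on_norm_diff_sq[OF \<beta>_l2 sm] by simp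
  ultimately have "hnormsq m (sdiff x (lincomb F c)) = phi_norm_sq * (\<Sum>\<^sub>\<infinity>e. (cmod (\<beta> e - curl \<psi> e))\<^sup>2)"
    unfolding \<beta>_def by (simp add: hnormsq_sdiff_flow_state_if_null[OF x y null])
  also have "\<dots> < \<epsilon>"
    using small phi_norm_sq_pos by (simp add: field_simps)
  finally show "\<exists>F c. finite F \<and> F \<subseteq> loop_states a kinv m lam \<and> hnormsq m (sdiff x (lincomb F c)) < \<epsilon>"
    using fin loop_state_mem_loop_states unfolding F_def by blast
qed

lemma closed_span_loop_states_approx:
  assumes x: "in_H x" and span: "in_cspan m (loop_states a kinv m lam) x" and "\<epsilon> > 0"
  obtains \<gamma> where "divergence_free \<gamma>" and "(\<lambda>e. (cmod (\<gamma> e))\<^sup>2) summable_on UNIV"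
    and "hnormsq m (sdiff x (flow_state \<gamma>)) < \<epsilon>"
proof -
  obtain F c where "finite F" and "F \<subseteq> loop_states a kinv m lam"
    and close: "hnormsq m (sdiff x (lincomb F c)) < \<epsilon>"
    using span \<open>\<epsilon> > 0\<close> unfolding in_cspan_def by blast
  then have F: "F \<subseteq> A0_eig a kinv m lam"
    unfolding loop_states_def by blast
  show thesis
    using that sum_amplitudes_divergence_free_l2[OF \<open>finite F\<close> F] close
    unfolding hnormsq_sdiff_lincomb_A0_eig[OF \<open>finite F\<close> F] by blast
qed

lemma closed_span_loop_states_residual_eq_0:
  assumes x: "in_H x" and span: "in_cspan m (loop_states a kinv m lam) x"
  shows "(\<Sum>\<^sub>\<infinity>e. phi_residual (fst x e)) + m * (\<Sum>\<^sub>\<infinity>v. (cmod (snd x v))\<^sup>2) = 0"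
    (is "?R + m * ?V = 0")
proof -
  have "?R + m * ?V \<le> 0"
  proof (rule field_le_epsilon)
    fix \<epsilon> :: real
    assume "\<epsilon> > 0"
    then obtain \<gamma> where \<gamma>_l2: "(\<lambda>e. (cmod (\<gamma> e))\<^sup>2) summable_on UNIV"
      and "hnormsq m (sdiff x (flow_state \<gamma>)) < \<epsilon>"
      using closed_span_loop_states_approx[OF x span] by blast
    then show "?R + m * ?V \<le> 0 + \<epsilon>"
      using hnormsq_sdiff_flow_state[OF x \<gamma>_l2] phi_norm_sq_pos
      by (smt (verit) mult_nonneg_nonneg)
  qed
  moreover have "?R \<ge> 0" and "?V \<ge> 0"
    using hnormsq_sdiff_flow_state(2,3)[OF x, of "\<lambda>_. 0"] by simp_all
  ultimately show ?thesis
    using m_nonneg by (smt (verit) mult_nonneg_nonneg)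
qed

lemma closed_span_loop_states_divergence_free:
  assumes x: "in_H x" and span: "in_cspan m (loop_states a kinv m lam) x"
  shows "divergence_free (\<lambda>e. phi_coeff (fst x e))"
proof (rule divergence_free_if_l2_approx)
  fix \<epsilon> :: real
  assume "\<epsilon> > 0"
  then obtain \<gamma> where "divergence_free \<gamma>" and \<gamma>_l2: "(\<lambda>e. (cmod (\<gamma> e))\<^sup>2) summable_on UNIV"
    and close: "hnormsq m (sdiff x (flow_state \<gamma>)) < \<epsilon> * phi_norm_sq"
    using closed_span_loop_states_approx[OF x span, of "\<epsilon> * phi_norm_sq"] phi_norm_sq_pos by auto
  then have "phi_norm_sq * (\<Sum>\<^sub>\<infinity>e. (cmod (phi_coeff (fst x e) - \<gamma> e))\<^sup>2) < phi_norm_sq * \<epsilon>"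
    using hnormsq_sdiff_flow_state(1)[OF x \<gamma>_l2] closed_span_loop_states_residual_eq_0[OF x span]
    by (simp add: mult.commute)
  then show "\<exists>\<gamma>. divergence_free \<gamma> \<and> (\<lambda>e. (cmod (phi_coeff (fst x e) - \<gamma> e))\<^sup>2) summable_on UNIV \<and>
      (\<Sum>\<^sub>\<infinity>e. (cmod (phi_coeff (fst x e) - \<gamma> e))\<^sup>2) < \<epsilon>"
    using \<open>divergence_free \<gamma>\<close> summable_on_norm_diff_sq[OF in_H_summable_phi_coeff_sq[OF x] \<gamma>_l2]
      phi_norm_sq_pos by auto
qed

lemma closed_span_loop_states_imp_A0_eig:
  assumes x: "in_H x" and span: "in_cspan m (loop_states a kinv m lam) x"
  shows "\<exists>y\<in>A0_eig a kinv m lam. hnormsq m (sdiff x y) = 0"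
proof -
  define \<pi> where "\<pi> e = phi_coeff (fst x e)" for e
  have \<pi>_l2: "(\<lambda>e. (cmod (\<pi> e))\<^sup>2) summable_on UNIV"
    unfolding \<pi>_def by (rule in_H_summable_phi_coeff_sq[OF x])
  have "flow_state \<pi> \<in> A0_eig a kinv m lam"
    using flow_state_in_A0_eig[OF _ \<pi>_l2] closed_span_loop_states_divergence_free[OF x span]
    unfolding \<pi>_def by blast
  moreover have "hnormsq m (sdiff x (flow_state \<pi>)) = 0"
    using hnormsq_sdiff_flow_state(1)[OF x \<pi>_l2] closed_span_loop_states_residual_eq_0[OF x span]
    unfolding \<pi>_def by simp
  ultimately show ?thesis
    by blast
qed

section \<open>Infinite multiplicity\<close>

lemma curl_face_delta_in_span_amplitudes:
  assumes "finite B" and "B \<subseteq> A0_eig a kinv m lam"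
    and spans: "\<forall>x\<in>A0_eig a kinv m lam. \<exists>c. hnormsq m (sdiff x (lincomb B c)) = 0"
  shows "curl (face_delta h) \<in> edge_fun.span (amplitude ` B)"
proof -
  have "loop_state h \<in> A0_eig a kinv m lam"
    using loop_state_mem_loop_states unfolding loop_states_def by blast
  then obtain c where null: "hnormsq m (sdiff (loop_state h) (lincomb B c)) = 0"
    using spans by blast
  define \<gamma> where "\<gamma> e = (\<Sum>b\<in>B. c b * amplitude b e)" for e
  have \<gamma>_l2: "(\<lambda>e. (cmod (\<gamma> e))\<^sup>2) summable_on UNIV"
    unfolding \<gamma>_def using sum_amplitudes_divergence_free_l2[OF assms(1,2)] by blast
  have delta_l2: "(\<lambda>e. (cmod (curl (face_delta h) e))\<^sup>2) summable_on UNIV"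
    using finite_curl_face_delta_support[of h]
    by (intro finite_nonzero_values_imp_summable_on) (auto elim: finite_subset[rotated])
  have "0 = hnormsq m (sdiff (loop_state h) (lincomb B c))"
    using null by simp
  also have "\<dots> = hnormsq m (sdiff (flow_state (curl (face_delta h))) (flow_state \<gamma>))"
    unfolding hnormsq_sdiff_lincomb_A0_eig[OF assms(1,2)] \<gamma>_def loop_state_def ..
  also have "\<dots> = phi_norm_sq * (\<Sum>\<^sub>\<infinity>e. (cmod (curl (face_delta h) e - \<gamma> e))\<^sup>2)"
    by (rule hnormsq_sdiff_flow_states[OF delta_l2 \<gamma>_l2])
  finally have "(\<Sum>\<^sub>\<infinity>e. (cmod (curl (face_delta h) e - \<gamma> e))\<^sup>2) = 0"
    using phi_norm_sq_pos by simp
  then have "curl (face_delta h) e - \<gamma> e = 0" for e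
    by (rule summable_on_norm_sq_eq_0D[OF summable_on_norm_diff_sq[OF delta_l2 \<gamma>_l2]]) simp
  then have "curl (face_delta h) = (\<Sum>b\<in>B. scale_fun (c b) (amplitude b))"
    unfolding \<gamma>_def by (simp add: fun_eq_iff sum_fun_apply scale_fun_def)
  also have "\<dots> \<in> edge_fun.span (amplitude ` B)"
    by (intro edge_fun.span_sum edge_fun.span_scale edge_fun.span_base) auto
  finally show ?thesis .
qed

lemma inf_mult_eigenvalue_A0: "inf_mult_eigenvalue a kinv m lam"
  unfolding inf_mult_eigenvalue_def
proof
  assume "\<exists>B. finite B \<and> B \<subseteq> A0_eig a kinv m lam \<and>
      (\<forall>x\<in>A0_eig a kinv m lam. \<exists>c. hnormsq m (sdiff x (lincomb B c)) = 0)"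
  then obtain B where B: "finite B" "B \<subseteq> A0_eig a kinv m lam"
    and "\<forall>x\<in>A0_eig a kinv m lam. \<exists>c. hnormsq m (sdiff x (lincomb B c)) = 0"
    by blast
  then have "(\<lambda>n::nat. curl (face_delta (0, int n))) ` {..card B} \<subseteq> edge_fun.span (amplitude ` B)"
    using curl_face_delta_in_span_amplitudes by blast
  then have "card ((\<lambda>n::nat. curl (face_delta (0, int n))) ` {..card B}) \<le> card (amplitude ` B)"
    using edge_fun.independent_span_bound[OF finite_imageI[OF B(1)] independent_column_curls] by blast
  also have "\<dots> \<le> card B"
    using B(1) by (rule card_image_le)
  finally show False
    using inj_column_curls by (simp add: card_image inj_on_def inj_def)
qed

end

theorem mainTheorem6:
  fixes a kinv m lam :: real
  assumes "a > 0" and "kinv \<ge> 0" and "m \<ge> 0"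
    and "(1 - (a * kinv)\<^sup>2 * (lam / a)) * sincE (lam / a) + 2 * (a * kinv) * cosE (lam / a) = 0"
  shows "inf_mult_eigenvalue a kinv m lam \<and>
         (\<forall>x. in_H x \<longrightarrow>
            (in_cspan m (loop_states a kinv m lam) x \<longleftrightarrow>
             (\<exists>y\<in>A0_eig a kinv m lam. hnormsq m (sdiff x y) = 0)))"
proof -
  interpret secular_root a kinv m lam
    by unfold_locales (rule assms)+
  show ?thesis
    using inf_mult_eigenvalue_A0 A0_eig_mem_closed_span_loop_states closed_span_loop_states_imp_A0_eig
    by blast
qed

end
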